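(* Let $a,b,c,d$ be nonnegative integers with $\min\{b,c\}=3$ and $\max\{a,d\}\leq 2$, and let $m\geq 4$ satisfy $2^{m-2}\geq(\max\{b,c\}-1)m^2$. Then $$\mathrm{forb}(m,3,F(a,b,c,d))=\mathrm{forb}(m,3,3\cdot I_2)=\mathrm{forb}(m,3,3\cdot K_2)-1.$$
   Context: An $s$-matrix has entries in $\{0,\dots,s-1\}$; simple means no repeated columns. $F\prec A$ means some submatrix of $A$ is a row/column permutation of $F$. $\mathrm{forb}(m,s,F)$ is the maximum number of columns of an $m$-rowed simple $s$-matrix $A$ with $F\not\prec A$. $F(a,b,c,d)$ is the 2-rowed $(0,1)$-matrix with $a$ columns $\binom00$, $b$ columns $\binom10$, $c$ columns $\binom01$, $d$ columns $\binom11$. $K_2$ is the $2\times4$ matrix of all $(0,1)$-columns of length 2, $I_2$ the $2\times2$ identity matrix, and $p\cdot F$ the concatenation of $p$ copies of $F$. *)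

theory Defs
  imports Main
begin

text \<open>A column of an m-rowed s-matrix is a list of length m with entries in {0..<s}.
  A simple m-rowed s-matrix (no repeated columns, column order irrelevant)
  is a set of such columns; its number of columns is the cardinality.\<close>

definition cols :: "nat \<Rightarrow> nat \<Rightarrow> nat list set" where
  "cols m s = {x. length x = m \<and> set x \<subseteq> {0..<s}}"

text \<open>A k-rowed matrix F (possibly with repeated columns) is a list of columns,
  each of length k.\<close>

definition config :: "nat \<Rightarrow> nat list list \<Rightarrow> nat \<Rightarrow> nat list set \<Rightarrow> bool" where
  "config k F m A \<longleftrightarrow>
     (\<exists>\<rho> \<gamma>. inj_on \<rho> {0..<k} \<and> \<rho> ` {0..<k} \<subseteq> {0..<m} \<and>
            inj_on \<gamma> {0..<length F} \<and> \<gamma> ` {0..<length F} \<subseteq> A \<and>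
            (\<forall>j<length F. \<forall>i<k. (\<gamma> j) ! (\<rho> i) = (F ! j) ! i))"

definition forb :: "nat \<Rightarrow> nat \<Rightarrow> nat \<Rightarrow> nat list list \<Rightarrow> nat" where
  "forb m s k F = Max {card A | A. A \<subseteq> cols m s \<and> \<not> config k F m A}"

definition Fabcd :: "nat \<Rightarrow> nat \<Rightarrow> nat \<Rightarrow> nat \<Rightarrow> nat list list" where
  "Fabcd a b c d = replicate a [0,0] @ replicate b [1,0] @ replicate c [0,1] @ replicate d [1,1]"

definition I2 :: "nat list list" where
  "I2 = [[1,0],[0,1]]"

definition K2 :: "nat list list" where
  "K2 = [[0,0],[1,0],[0,1],[1,1]]"

definition copies :: "nat \<Rightarrow> nat list list \<Rightarrow> nat list list" where
  "copies p F = concat (replicate p F)"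

end

theory Submission
  imports Defs
begin

text \<open>
  The upper bounds start from forb(m, 3, K2) = (m + 2) 2^(m-1): deleting a row splits a K2-free
  matrix into three fibers; the 2-fiber and the union of the 0- and 1-fibers are again K2-free,
  while the intersection of the 0- and 1-fibers has no row containing both 0 and 1, hence at most
  2^(m-1) columns.  A matrix avoiding 3 K2 becomes K2-free once, for every pair of rows, the at
  most two columns showing its rarest pattern are deleted; so it has at most
  (m + 2) 2^(m-1) + m(m-1) columns.

  For 3 I2 one more column is saved by orienting each pair of rows towards a crossing pattern
  (0 above 1) occurring at most twice.  A directed 3-cycle makes the bound on the fiber
  intersection strict; otherwise the tournament is transitive, and for the arc from its source to
  its sink a single column has to be deleted instead of two.  For F(a,b,c,d) either this argument
  applies, or some pair of rows shows some pattern at most once, or some pair of rows shows both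
  crossing patterns fewer than max(b,c) times; deleting all of these costs at most max(b,c) m^2
  columns but leaves a K2-free matrix 2^(m-2) columns short of the K2 bound, and the hypothesis
  on m makes this a gain.

  The matching constructions take the columns with no 0 above a 1 plus two crossing columns for
  all pairs of rows but one (for 3 I2 and F(a,b,c,d)), and the columns with at most one 0 plus
  the two columns vanishing exactly on a given pair of rows, for every pair (for 3 K2).
\<close>

lemma card_le_card_Diff_add:
  assumes "finite U"
  shows "card A \<le> card (A - U) + card U"
proof (cases "finite A")
  case True
  then have "card A = card (A \<inter> U) + card (A - U)"
    by (rule card_Int_Diff)
  moreover have "card (A \<inter> U) \<le> card U"
    using assms by (intro card_mono) auto
  ultimately show ?thesis
    by simp
qed simp

lemma card_le_Suc_if_subset_insert: "finite B \<Longrightarrow> U \<subseteq> insert a B \<Longrightarrow> card U \<le> Suc (card B)"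
  using card_mono[of "insert a B" U] card_insert_if[of B a] by (auto split: if_splits)

lemma card_UN_le_mult:
  assumes "finite I" "\<And>i. i \<in> I \<Longrightarrow> card (B i) \<le> k"
  shows "card (\<Union>i\<in>I. B i) \<le> k * card I"
  using card_UN_le[OF assms(1), of B] sum_bounded_above[of I "\<lambda>i. card (B i)" k] assms(2)
  by (simp add: mult.commute)

lemma card_doubleton_le: "card {a, b} \<le> 2"
  by (cases "a = b") simp_all

lemma count_list_replicate: "count_list (replicate n x) y = (if x = y then n else 0)"
  by (induction n) auto

lemma count_list_eq_card: "count_list F w = card {t. t < length F \<and> F ! t = w}"
  by (simp add: count_list_eq_length_filter length_filter_conv_card eq_commute)

lemma length_2_eq: "length w = 2 \<Longrightarrow> w = [w ! 0, w ! 1]"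
  by (intro nth_equalityI) (auto simp: less_2_cases_iff)

section \<open>Columns, row insertion and fibers\<close>

lemma finite_cols: "finite (cols m s)"
proof -
  have "cols m s = {xs. set xs \<subseteq> {0..<s} \<and> length xs = m}"
    unfolding cols_def by auto
  then show ?thesis
    using finite_lists_length_eq[of "{0..<s}" m] by simp
qed

lemma finite_if_subset_cols: "B \<subseteq> A \<Longrightarrow> A \<subseteq> cols m s \<Longrightarrow> finite B"
  using finite_cols by (meson finite_subset)

lemma cols_nth_less: "x \<in> cols m s \<Longrightarrow> i < m \<Longrightarrow> x ! i < s"
  unfolding cols_def by (auto dest!: nth_mem)

lemma cols3_nth: "x \<in> cols m 3 \<Longrightarrow> i < m \<Longrightarrow> x ! i \<in> {0, 1, 2}"
  using cols_nth_less[of x m 3 i] by auto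

lemma Cons_in_cols_Suc: "v # t \<in> cols (Suc n) s \<longleftrightarrow> v < s \<and> t \<in> cols n s"
  unfolding cols_def by auto

definition insert_at :: "nat \<Rightarrow> 'a \<Rightarrow> 'a list \<Rightarrow> 'a list" where
  "insert_at r v t = take r t @ v # drop r t"

lemma length_insert_at [simp]: "r \<le> length t \<Longrightarrow> length (insert_at r v t) = Suc (length t)"
  unfolding insert_at_def by simp

lemma nth_insert_at:
  "r \<le> length t \<Longrightarrow> insert_at r v t ! i = (if i < r then t ! i else if i = r then v else t ! (i - 1))"
  unfolding insert_at_def by (auto simp: nth_append min_def nth_Cons')

lemma nth_insert_at_same [simp]: "r \<le> length t \<Longrightarrow> insert_at r v t ! r = v"
  by (simp add: nth_insert_at)

lemma insert_at_eq_iff: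
  assumes "r \<le> length t" "r \<le> length t'"
  shows "insert_at r v t = insert_at r v t' \<longleftrightarrow> t = t'"
proof
  assume eq: "insert_at r v t = insert_at r v t'"
  have "take r t = take r t'"
    using arg_cong[OF eq, of "take r"] assms by (simp add: insert_at_def)
  moreover have "drop r t = drop r t'"
    using arg_cong[OF eq, of "drop (Suc r)"] assms by (simp add: insert_at_def)
  ultimately show "t = t'"
    by (metis append_take_drop_id)
qed simp

lemma insert_at_remove_nth:
  "r < length x \<Longrightarrow> insert_at r (x ! r) (take r x @ drop (Suc r) x) = x"
  unfolding insert_at_def by (simp add: min_def id_take_nth_drop[symmetric])

lemma set_insert_at: "r \<le> length t \<Longrightarrow> set (insert_at r v t) = insert v (set t)"
  unfolding insert_at_def by (metis Un_insert_right append_take_drop_id set_append list.set(2))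

definition lift_row :: "nat \<Rightarrow> nat \<Rightarrow> nat" where
  "lift_row r i = (if i < r then i else Suc i)"

lemma nth_insert_at_lift_row [simp]: "r \<le> length t \<Longrightarrow> insert_at r v t ! lift_row r i = t ! i"
  unfolding lift_row_def by (simp add: nth_insert_at)

lemma lift_row_less: "i < n \<Longrightarrow> lift_row r i < Suc n"
  unfolding lift_row_def by auto

lemma lift_row_inject [simp]: "lift_row r i = lift_row r j \<longleftrightarrow> i = j"
  unfolding lift_row_def by auto

lemma lift_row_neq [simp]: "lift_row r i \<noteq> r"
  unfolding lift_row_def by auto

lemma ex_lift_row: "i < Suc n \<Longrightarrow> i \<noteq> r \<Longrightarrow> r \<le> n \<Longrightarrow> \<exists>i'<n. lift_row r i' = i"
  by (rule exI[of _ "if i < r then i else i - 1"]) (auto simp: lift_row_def)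

definition fiber :: "nat \<Rightarrow> nat \<Rightarrow> 'a \<Rightarrow> 'a list set \<Rightarrow> 'a list set" where
  "fiber n r v A = {t. length t = n \<and> insert_at r v t \<in> A}"

lemma fiber_subset_cols:
  assumes "A \<subseteq> cols (Suc n) s" "r \<le> n"
  shows "fiber n r v A \<subseteq> cols n s"
proof
  fix t assume "t \<in> fiber n r v A"
  then have "length t = n" "set (insert_at r v t) \<subseteq> {0..<s}"
    using assms(1) by (auto simp: fiber_def cols_def)
  then show "t \<in> cols n s"
    using assms(2) by (simp add: cols_def set_insert_at)
qed

lemma fiber_eq_empty_if_nth_neq:
  assumes "\<forall>x\<in>D. x ! r \<noteq> v" "r \<le> n"
  shows "fiber n r v D = {}"
  using assms by (auto simp: fiber_def)

lemma both_fibers_nth: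
  assumes "t \<in> fiber n r 0 A \<inter> fiber n r 1 A" "r \<le> n" "v \<in> {0, 1}"
  shows "insert_at r v t \<in> A" "insert_at r v t ! r = v" "insert_at r v t ! lift_row r i = t ! i"
  using assms by (auto simp: fiber_def)

lemma card_fiber:
  assumes "A \<subseteq> cols (Suc n) s" "r \<le> n"
  shows "card {x \<in> A. x ! r = v} = card (fiber n r v A)"
proof -
  have "bij_betw (insert_at r v) (fiber n r v A) {x \<in> A. x ! r = v}"
  proof (rule bij_betw_imageI)
    show "inj_on (insert_at r v) (fiber n r v A)"
    proof (rule inj_onI)
      fix t t' assume "t \<in> fiber n r v A" "t' \<in> fiber n r v A" "insert_at r v t = insert_at r v t'"
      then show "t = t'"
        using assms(2) insert_at_eq_iff[of r t t' v] by (simp add: fiber_def)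
    qed
    show "insert_at r v ` fiber n r v A = {x \<in> A. x ! r = v}"
    proof (intro equalityI subsetI)
      fix x assume x: "x \<in> {x \<in> A. x ! r = v}"
      then have "length x = Suc n"
        using assms(1) by (auto simp: cols_def)
      then have "take r x @ drop (Suc r) x \<in> fiber n r v A"
        using x assms(2) insert_at_remove_nth[of r x] by (simp add: fiber_def)
      moreover have "x = insert_at r v (take r x @ drop (Suc r) x)"
        using x assms(2) insert_at_remove_nth[of r x] \<open>length x = Suc n\<close> by simp
      ultimately show "x \<in> insert_at r v ` fiber n r v A"
        by (rule rev_image_eqI)
    next
      fix x assume "x \<in> insert_at r v ` fiber n r v A"
      then show "x \<in> {x \<in> A. x ! r = v}"
        using assms(2) by (auto simp: fiber_def)
    qed
  qed
  then show ?thesis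
    by (simp add: bij_betw_same_card)
qed

lemma card_eq_sum_fibers:
  assumes "A \<subseteq> cols (Suc n) 3" "r \<le> n"
  shows "card A = card (fiber n r 0 A) + card (fiber n r 1 A) + card (fiber n r 2 A)"
proof -
  have "finite A"
    using assms(1) finite_cols by (rule finite_subset)
  have "A = {x \<in> A. x ! r = 0} \<union> {x \<in> A. x ! r = 1} \<union> {x \<in> A. x ! r = 2}"
    using assms cols_nth_less[of _ "Suc n" 3 r] by force
  then have "card A = card ({x \<in> A. x ! r = 0} \<union> {x \<in> A. x ! r = 1} \<union> {x \<in> A. x ! r = 2})"
    by simp
  also have "\<dots> = card {x \<in> A. x ! r = 0} + card {x \<in> A. x ! r = 1} + card {x \<in> A. x ! r = 2}"
    using \<open>finite A\<close> by (subst card_Un_disjoint, auto)+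
  finally show ?thesis
    using card_fiber[OF assms] by simp
qed

lemma card_eq_sum_fibers_Un_Int:
  assumes "A \<subseteq> cols (Suc n) 3" "r \<le> n"
  shows "card A = card (fiber n r 2 A) + card (fiber n r 0 A \<union> fiber n r 1 A) + card (fiber n r 0 A \<inter> fiber n r 1 A)"
proof -
  have "finite (fiber n r v A)" for v
    using fiber_subset_cols[OF assms] finite_cols by (rule finite_subset)
  then show ?thesis
    using card_eq_sum_fibers[OF assms] card_Un_Int[of "fiber n r 0 A" "fiber n r 1 A"] by simp
qed

section \<open>K2-free matrices\<close>

definition no_row_01 :: "nat \<Rightarrow> nat list set \<Rightarrow> bool" where
  "no_row_01 n D \<longleftrightarrow> D \<subseteq> cols n 3 \<and> (\<forall>i<n. (\<forall>x\<in>D. x ! i \<noteq> 0) \<or> (\<forall>x\<in>D. x ! i \<noteq> 1))"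

lemma no_row_01_fiber:
  assumes "no_row_01 (Suc n) D" "r \<le> n"
  shows "no_row_01 n (fiber n r v D)"
  unfolding no_row_01_def
proof (intro conjI allI impI)
  show "fiber n r v D \<subseteq> cols n 3"
    using assms fiber_subset_cols by (auto simp: no_row_01_def)
  fix i assume "i < n"
  then have "(\<forall>x\<in>D. x ! lift_row r i \<noteq> 0) \<or> (\<forall>x\<in>D. x ! lift_row r i \<noteq> 1)"
    using assms(1) lift_row_less unfolding no_row_01_def by blast
  then show "(\<forall>t\<in>fiber n r v D. t ! i \<noteq> 0) \<or> (\<forall>t\<in>fiber n r v D. t ! i \<noteq> 1)"
    using assms(2) by (fastforce simp: fiber_def)
qed

lemma no_row_01_card_le: "no_row_01 n D \<Longrightarrow> card D \<le> 2 ^ n"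
proof (induction n arbitrary: D)
  case 0
  then have "D \<subseteq> {[]}"
    by (auto simp: no_row_01_def cols_def)
  then show ?case
    using card_mono[of "{[]}" D] by simp
next
  case (Suc n)
  have split: "card D = card (fiber n 0 0 D) + card (fiber n 0 1 D) + card (fiber n 0 2 D)"
    using Suc.prems by (intro card_eq_sum_fibers) (auto simp: no_row_01_def)
  have IH: "card (fiber n 0 v D) \<le> 2 ^ n" for v
    using Suc.IH no_row_01_fiber[OF Suc.prems] by blast
  have "fiber n 0 0 D = {} \<or> fiber n 0 1 D = {}"
    using Suc.prems fiber_eq_empty_if_nth_neq[of D 0] unfolding no_row_01_def by blast
  then show ?case
    using split IH[of 0] IH[of 1] IH[of 2] by auto
qed

lemma no_row_01_card_le_const_row:
  assumes "no_row_01 n D" "i < n" "\<forall>x\<in>D. x ! i = 2"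
  shows "card D \<le> 2 ^ (n - 1)"
proof -
  obtain n' where n: "n = Suc n'"
    using assms(2) by (cases n) auto
  have "card D = card (fiber n' i 0 D) + card (fiber n' i 1 D) + card (fiber n' i 2 D)"
    using assms n by (intro card_eq_sum_fibers) (auto simp: no_row_01_def)
  moreover have "fiber n' i 0 D = {}" "fiber n' i 1 D = {}"
    using assms n by (auto intro!: fiber_eq_empty_if_nth_neq)
  moreover have "card (fiber n' i 2 D) \<le> 2 ^ n'"
    using assms n by (intro no_row_01_card_le no_row_01_fiber) auto
  ultimately show ?thesis
    using n by simp
qed

lemma no_row_01_card_le_two_rows:
  assumes "no_row_01 n D" "i < n" "k < n" "i \<noteq> k" "\<forall>x\<in>D. x ! i = 2 \<or> x ! k = 2"
  shows "2 * card D \<le> 3 * 2 ^ (n - 1)"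
proof -
  obtain n' where n: "n = Suc n'"
    using assms(2) by (cases n) auto
  have i: "i \<le> n'"
    using assms(2) n by simp
  obtain k' where k': "k' < n'" "lift_row i k' = k"
    using ex_lift_row[of k n' i] assms(3,4) n i by auto
  have fibers: "no_row_01 n' (fiber n' i v D)" for v
    using assms(1) n i by (simp add: no_row_01_fiber)
  have split: "card D = card (fiber n' i 0 D) + card (fiber n' i 1 D) + card (fiber n' i 2 D)"
    using assms(1) n i by (intro card_eq_sum_fibers) (auto simp: no_row_01_def)
  have big: "card (fiber n' i 2 D) \<le> 2 ^ n'"
    by (rule no_row_01_card_le[OF fibers])
  have small: "card (fiber n' i v D) \<le> 2 ^ (n' - 1)" if "v \<noteq> 2" for v
  proof (rule no_row_01_card_le_const_row[OF fibers k'(1)])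
    show "\<forall>t\<in>fiber n' i v D. t ! k' = 2"
      using assms(5) that i k'(2) by (fastforce simp: fiber_def)
  qed
  have "fiber n' i 0 D = {} \<or> fiber n' i 1 D = {}"
    using assms(1,2) n i fiber_eq_empty_if_nth_neq[of D i] unfolding no_row_01_def by blast
  moreover have "2 * 2 ^ (n' - 1) = (2::nat) ^ n'"
    using k'(1) by (cases n') auto
  ultimately show ?thesis
    using n split big small[of 0] small[of 1] by auto
qed

text \<open>K2_free m A is \<not> config 2 K2 m A, spelled out pair of rows by pair of rows.\<close>

definition K2_free :: "nat \<Rightarrow> nat list set \<Rightarrow> bool" where
  "K2_free m A \<longleftrightarrow> (\<forall>i<m. \<forall>j<m. i \<noteq> j \<longrightarrow> (\<exists>u<2. \<exists>v<2. \<forall>x\<in>A. \<not> (x ! i = u \<and> x ! j = v)))"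

lemma K2_free_subset: "K2_free m A \<Longrightarrow> B \<subseteq> A \<Longrightarrow> K2_free m B"
  unfolding K2_free_def by blast

lemma K2_free_fibers:
  assumes "K2_free (Suc n) A" "r \<le> n" "B \<subseteq> (\<Union>v. fiber n r v A)"
  shows "K2_free n B"
  unfolding K2_free_def
proof (intro allI impI)
  fix i j assume ij: "i < n" "j < n" "i \<noteq> j"
  then obtain u v where uv: "u < 2" "v < 2" "\<forall>x\<in>A. \<not> (x ! lift_row r i = u \<and> x ! lift_row r j = v)"
    using assms(1) lift_row_less unfolding K2_free_def by (metis lift_row_inject)
  have "\<forall>t\<in>B. \<not> (t ! i = u \<and> t ! j = v)"
    using assms(2,3) uv(3) by (fastforce simp: fiber_def)
  then show "\<exists>u<2. \<exists>v<2. \<forall>x\<in>B. \<not> (x ! i = u \<and> x ! j = v)"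
    using uv(1,2) by blast
qed

text \<open>A column lying in both the 0- and the 1-fiber of row r pairs, in A, a 0 and a 1 in row r
  with the same entries elsewhere; so a row of the intersection carrying both 0 and 1 would
  produce all four (0,1)-patterns on that row and r.\<close>

lemma no_row_01_fiber_Int:
  assumes "K2_free (Suc n) A" "A \<subseteq> cols (Suc n) 3" "r \<le> n"
  shows "no_row_01 n (fiber n r 0 A \<inter> fiber n r 1 A)"
  unfolding no_row_01_def
proof (intro conjI allI impI)
  show "fiber n r 0 A \<inter> fiber n r 1 A \<subseteq> cols n 3"
    using fiber_subset_cols[OF assms(2,3)] by blast
  fix i assume i: "i < n"
  obtain u v where uv: "u < 2" "v < 2" "\<forall>x\<in>A. \<not> (x ! lift_row r i = u \<and> x ! r = v)"
    using assms(1,3) lift_row_less[OF i] unfolding K2_free_def by (metis le_imp_less_Suc lift_row_neq)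
  have "\<not> (t ! i = u \<and> insert_at r v t \<in> A)" if "length t = n" for t
    using uv(3) that assms(3) by auto
  then have "\<forall>t\<in>fiber n r 0 A \<inter> fiber n r 1 A. t ! i \<noteq> u"
    using uv(2) by (auto simp: fiber_def less_2_cases_iff)
  then show "(\<forall>t\<in>fiber n r 0 A \<inter> fiber n r 1 A. t ! i \<noteq> 0) \<or> (\<forall>t\<in>fiber n r 0 A \<inter> fiber n r 1 A. t ! i \<noteq> 1)"
    using uv(1) by (auto simp: less_2_cases_iff)
qed

lemma K2_free_card_le:
  "K2_free m A \<Longrightarrow> A \<subseteq> cols m 3 \<Longrightarrow> 2 * card A \<le> (m + 2) * 2 ^ m"
proof (induction m arbitrary: A)
  case 0
  then have "A \<subseteq> {[]}"
    by (auto simp: cols_def)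
  then show ?case
    using card_mono[of "{[]}" A] by simp
next
  case (Suc n)
  have sub: "fiber n 0 v A \<subseteq> cols n 3" for v
    using Suc.prems(2) by (rule fiber_subset_cols) simp
  have "2 * card (fiber n 0 2 A) \<le> (n + 2) * 2 ^ n"
    using Suc.prems sub by (intro Suc.IH K2_free_fibers[of n A 0]) auto
  moreover have "2 * card (fiber n 0 0 A \<union> fiber n 0 1 A) \<le> (n + 2) * 2 ^ n"
    using Suc.prems sub by (intro Suc.IH K2_free_fibers[of n A 0]) auto
  moreover have "card (fiber n 0 0 A \<inter> fiber n 0 1 A) \<le> 2 ^ n"
    using Suc.prems by (intro no_row_01_card_le no_row_01_fiber_Int) auto
  ultimately show ?case
    using card_eq_sum_fibers_Un_Int[OF Suc.prems(2), of 0] by simp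
qed

lemma K2_free_card_le_fiber_Int:
  assumes "K2_free (Suc n) A" "A \<subseteq> cols (Suc n) 3" "r \<le> n"
  shows "2 * card A \<le> 2 * (n + 2) * 2 ^ n + 2 * card (fiber n r 0 A \<inter> fiber n r 1 A)"
proof -
  have sub: "fiber n r v A \<subseteq> cols n 3" for v
    using assms(2,3) by (rule fiber_subset_cols)
  have "2 * card (fiber n r 2 A) \<le> (n + 2) * 2 ^ n"
    using assms sub by (intro K2_free_card_le K2_free_fibers[of n A r]) auto
  moreover have "2 * card (fiber n r 0 A \<union> fiber n r 1 A) \<le> (n + 2) * 2 ^ n"
    using assms sub by (intro K2_free_card_le K2_free_fibers[of n A r]) auto
  ultimately show ?thesis
    using card_eq_sum_fibers_Un_Int[OF assms(2,3)] by simp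
qed

text \<open>Split along row j: the columns lying over both 0 and 1 in row j all carry a 2 in row i,
  which halves the bound for them.\<close>

lemma K2_free_card_le_if_no_crossing:
  assumes "K2_free m A" "A \<subseteq> cols m 3" "i < m" "j < m" "i \<noteq> j"
    and no_crossing: "\<forall>x\<in>A. \<not> (x ! i = 0 \<and> x ! j = 1) \<and> \<not> (x ! i = 1 \<and> x ! j = 0)"
  shows "2 * card A + 2 ^ (m - 1) \<le> (m + 2) * 2 ^ m"
proof -
  obtain n where n: "m = Suc n"
    using assms(3) by (cases m) auto
  have j: "j \<le> n"
    using assms(4) n by simp
  obtain i' where i': "i' < n" "lift_row j i' = i"
    using ex_lift_row[of i n j] assms(3,5) n j by auto
  define D where "D = fiber n j 0 A \<inter> fiber n j 1 A"
  have "t ! i' = 2" if t: "t \<in> D" for t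
  proof -
    have "t \<in> cols n 3"
      using t fiber_subset_cols[OF assms(2)[unfolded n] j] unfolding D_def by blast
    then have "t ! i' \<in> {0, 1, 2}"
      using i'(1) by (rule cols3_nth)
    moreover have "insert_at j v t \<in> A \<and> insert_at j v t ! j = v \<and> insert_at j v t ! i = t ! i'"
      if "v \<in> {0, 1}" for v
      using both_fibers_nth[OF t[unfolded D_def] j that] i'(2) by auto
    ultimately show ?thesis
      using no_crossing by (metis insert_iff singletonD)
  qed
  then have "card D \<le> 2 ^ (n - 1)"
    using assms(1,2) n j i'(1) unfolding D_def
    by (intro no_row_01_card_le_const_row no_row_01_fiber_Int) auto
  moreover have "2 * card A \<le> 2 * (n + 2) * 2 ^ n + 2 * card D"
    using K2_free_card_le_fiber_Int assms(1,2) n j unfolding D_def by blast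
  moreover have "2 * 2 ^ (n - 1) = (2::nat) ^ n"
    using i'(1) by (cases n) auto
  ultimately show ?thesis
    using n by simp
qed

text \<open>Split along row j again: now the columns lying over both 0 and 1 in row j carry a 2 in row
  i or in row k, which cuts the bound for them from 2^(m-1) to 3 2^(m-3).\<close>

lemma K2_free_card_less_if_01_cycle:
  assumes "K2_free m A" "A \<subseteq> cols m 3" "i < m" "j < m" "k < m" "i \<noteq> j" "j \<noteq> k" "i \<noteq> k"
    and cycle: "\<forall>x\<in>A. \<not> (x ! i = 0 \<and> x ! j = 1)" "\<forall>x\<in>A. \<not> (x ! j = 0 \<and> x ! k = 1)"
      "\<forall>x\<in>A. \<not> (x ! k = 0 \<and> x ! i = 1)"
  shows "2 * card A < (m + 2) * 2 ^ m"
proof -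
  obtain n where n: "m = Suc n"
    using assms(3) by (cases m) auto
  have j: "j \<le> n"
    using assms(4) n by simp
  obtain i' where i': "i' < n" "lift_row j i' = i"
    using ex_lift_row[of i n j] assms(3,6) n j by auto
  obtain k' where k': "k' < n" "lift_row j k' = k"
    using ex_lift_row[of k n j] assms(5,7) n j by auto
  define D where "D = fiber n j 0 A \<inter> fiber n j 1 A"
  have "t ! i' = 2 \<or> t ! k' = 2" if t: "t \<in> D" for t
  proof -
    have "t \<in> cols n 3"
      using t fiber_subset_cols[OF assms(2)[unfolded n] j] unfolding D_def by blast
    note vals = cols3_nth[OF this i'(1)] cols3_nth[OF this k'(1)]
    have x: "insert_at j v t \<in> A \<and> insert_at j v t ! j = v \<and>
        insert_at j v t ! i = t ! i' \<and> insert_at j v t ! k = t ! k'" if "v \<in> {0, 1}" for v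
      using both_fibers_nth[OF t[unfolded D_def] j that] i'(2) k'(2) by auto
    have "t ! i' \<noteq> 0" "t ! k' \<noteq> 1" "\<not> (t ! i' = 1 \<and> t ! k' = 0)"
      using cycle x[of 0] x[of 1] by auto
    then show ?thesis
      using vals by auto
  qed
  moreover have "no_row_01 n D"
    using assms(1,2) n j unfolding D_def by (intro no_row_01_fiber_Int) auto
  moreover have "i' \<noteq> k'"
    using i'(2) k'(2) assms(8) by auto
  ultimately have "2 * card D \<le> 3 * 2 ^ (n - 1)"
    using i'(1) k'(1) no_row_01_card_le_two_rows by blast
  moreover have "2 * card A \<le> 2 * (n + 2) * 2 ^ n + 2 * card D"
    using K2_free_card_le_fiber_Int assms(1,2) n j unfolding D_def by blast
  ultimately have "2 * card A \<le> 2 * (n + 2) * 2 ^ n + 3 * 2 ^ (n - 1)"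
    by linarith
  moreover have "(m + 2) * 2 ^ m = 2 * (n + 2) * 2 ^ n + 4 * 2 ^ (n - 1)"
    using n i'(1) by (cases n) auto
  moreover have "(0::nat) < 2 ^ (n - 1)"
    by simp
  ultimately show ?thesis
    by linarith
qed

section \<open>Configurations on two rows\<close>

definition pairs :: "nat \<Rightarrow> (nat \<times> nat) set" where
  "pairs m = {(i, j). i < j \<and> j < m}"

lemma finite_pairs: "finite (pairs m)"
  by (rule finite_subset[of _ "{..<m} \<times> {..<m}"]) (auto simp: pairs_def)

lemma card_pairs: "2 * card (pairs m) = m * (m - 1)"
proof (induction m)
  case 0
  then show ?case
    by (simp add: pairs_def)
next
  case (Suc m)
  have "pairs (Suc m) = pairs m \<union> (\<lambda>i. (i, m)) ` {..<m}"
    by (auto simp: pairs_def)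
  moreover have "pairs m \<inter> (\<lambda>i. (i, m)) ` {..<m} = {}"
    by (auto simp: pairs_def)
  moreover have "card ((\<lambda>i. (i, m)) ` {..<m}) = m"
    by (simp add: card_image inj_on_def)
  ultimately have "card (pairs (Suc m)) = card (pairs m) + m"
    using finite_pairs by (simp add: card_Un_disjoint)
  then show ?case
    using Suc.IH by (cases m) (simp_all add: algebra_simps)
qed

definition pattern_cols :: "nat list set \<Rightarrow> nat \<Rightarrow> nat \<Rightarrow> nat list \<Rightarrow> nat list set" where
  "pattern_cols A i j w = {x \<in> A. [x ! i, x ! j] = w}"

lemma pattern_cols_swap: "pattern_cols A i j [u, v] = pattern_cols A j i [v, u]"
  unfolding pattern_cols_def by auto

lemma config_2_imp_counts:
  assumes "\<forall>w\<in>set F. length w = 2" "finite A" "config 2 F m A"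
  shows "\<exists>i<m. \<exists>j<m. i \<noteq> j \<and> (\<forall>w. count_list F w \<le> card (pattern_cols A i j w))"
proof -
  obtain \<rho> \<gamma> where \<rho>: "inj_on \<rho> {0..<2}" "\<rho> ` {0..<2} \<subseteq> {0..<m}"
    and \<gamma>: "inj_on \<gamma> {0..<length F}" "\<gamma> ` {0..<length F} \<subseteq> A"
    and entries: "\<forall>t<length F. \<forall>i<2. \<gamma> t ! \<rho> i = F ! t ! i"
    using assms(3) unfolding config_def by (elim exE conjE) (rule that; assumption)
  have rows: "\<rho> 0 < m" "\<rho> 1 < m" "\<rho> 0 \<noteq> \<rho> 1"
    using \<rho>(2) inj_onD[OF \<rho>(1), of 0 1] by (auto simp: image_subset_iff)
  have "count_list F w \<le> card (pattern_cols A (\<rho> 0) (\<rho> 1) w)" for w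
    unfolding count_list_eq_card
  proof (rule card_inj_on_le)
    show "inj_on \<gamma> {t. t < length F \<and> F ! t = w}"
      using \<gamma>(1) by (rule inj_on_subset) auto
    show "finite (pattern_cols A (\<rho> 0) (\<rho> 1) w)"
      using assms(2) by (simp add: pattern_cols_def)
    show "\<gamma> ` {t. t < length F \<and> F ! t = w} \<subseteq> pattern_cols A (\<rho> 0) (\<rho> 1) w"
    proof clarify
      fix t assume t: "t < length F"
      then have "F ! t = [F ! t ! 0, F ! t ! 1]"
        using assms(1) nth_mem[OF t] by (intro length_2_eq) simp
      then show "\<gamma> t \<in> pattern_cols A (\<rho> 0) (\<rho> 1) (F ! t)"
        using \<gamma>(2) entries t by (auto simp: pattern_cols_def)
    qed
  qed
  then show ?thesis
    using rows by blast
qed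

lemma counts_imp_config_2:
  assumes "\<forall>w\<in>set F. length w = 2" "finite A" "i < m" "j < m" "i \<noteq> j"
    and counts: "\<forall>w. count_list F w \<le> card (pattern_cols A i j w)"
  shows "config 2 F m A"
proof -
  define S where "S w = {t. t < length F \<and> F ! t = w}" for w
  have "\<forall>w. \<exists>g. g ` S w \<subseteq> pattern_cols A i j w \<and> inj_on g (S w)"
  proof
    fix w
    show "\<exists>g. g ` S w \<subseteq> pattern_cols A i j w \<and> inj_on g (S w)"
      using counts[rule_format, of w] assms(2)
      by (intro card_le_inj) (simp_all add: S_def pattern_cols_def count_list_eq_card)
  qed
  then obtain g where "\<forall>w. g w ` S w \<subseteq> pattern_cols A i j w \<and> inj_on (g w) (S w)"
    by (rule choice[THEN exE])
  then have g: "\<And>w. g w ` S w \<subseteq> pattern_cols A i j w" "\<And>w. inj_on (g w) (S w)"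
    by simp_all
  define \<gamma> where "\<gamma> t = g (F ! t) t" for t
  define \<rho> where "\<rho> s = (if s = 0 then i else j)" for s :: nat
  have \<gamma>_pattern: "\<gamma> t \<in> pattern_cols A i j (F ! t)" if "t < length F" for t
    using g(1)[of "F ! t"] that unfolding \<gamma>_def S_def by blast
  show ?thesis
    unfolding config_def
  proof (intro exI conjI)
    show "inj_on \<rho> {0..<2}" "\<rho> ` {0..<2} \<subseteq> {0..<m}"
      using assms(3-5) by (auto simp: \<rho>_def inj_on_def)
    show "inj_on \<gamma> {0..<length F}"
    proof (rule inj_onI)
      fix t t' assume t: "t \<in> {0..<length F}" and t': "t' \<in> {0..<length F}" and eq: "\<gamma> t = \<gamma> t'"
      then have "F ! t = F ! t'"
        using \<gamma>_pattern[of t] \<gamma>_pattern[of t'] by (auto simp: pattern_cols_def)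
      then show "t = t'"
        using g(2)[of "F ! t"] t t' eq unfolding \<gamma>_def S_def inj_on_def by auto
    qed
    show "\<gamma> ` {0..<length F} \<subseteq> A"
      using \<gamma>_pattern by (auto simp: pattern_cols_def)
    show "\<forall>t<length F. \<forall>s<2. \<gamma> t ! \<rho> s = F ! t ! s"
    proof (intro allI impI)
      fix t s :: nat assume "t < length F" "s < 2"
      then have "F ! t = [\<gamma> t ! i, \<gamma> t ! j]"
        using \<gamma>_pattern by (simp add: pattern_cols_def)
      then show "\<gamma> t ! \<rho> s = F ! t ! s"
        using \<open>s < 2\<close> by (auto simp: \<rho>_def less_2_cases_iff)
    qed
  qed
qed

lemma not_config_2_imp_rare_pattern:
  assumes "\<forall>w\<in>set F. length w = 2" "A \<subseteq> cols m 3" "\<not> config 2 F m A" "i < m" "j < m" "i \<noteq> j"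
  shows "\<exists>w\<in>set F. card (pattern_cols A i j w) < count_list F w"
proof (rule ccontr)
  assume none: "\<not> ?thesis"
  have "count_list F w \<le> card (pattern_cols A i j w)" for w
  proof (cases "w \<in> set F")
    case True
    then show ?thesis
      using none by (simp add: not_less)
  qed simp
  moreover have "finite A"
    using assms(2) finite_cols by (rule finite_subset)
  ultimately have "config 2 F m A"
    using assms(1,4-6) by (intro counts_imp_config_2) auto
  then show False
    using assms(3) by simp
qed

lemma not_config_2_if_rare_crossings:
  assumes "\<forall>w\<in>set F. length w = 2" "3 \<le> count_list F [1, 0]" "3 \<le> count_list F [0, 1]" "finite A"
    and rare: "\<And>i j. (i, j) \<in> pairs m \<Longrightarrow>
      card (pattern_cols A i j [1, 0]) \<le> 2 \<or> card (pattern_cols A i j [0, 1]) \<le> 2"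
  shows "\<not> config 2 F m A"
proof
  assume "config 2 F m A"
  then obtain i j where ij: "i < m" "j < m" "i \<noteq> j"
    and counts: "\<forall>w. count_list F w \<le> card (pattern_cols A i j w)"
    using config_2_imp_counts[OF assms(1,4)] by blast
  have "3 \<le> card (pattern_cols A i j [1, 0])" "3 \<le> card (pattern_cols A i j [0, 1])"
    using counts assms(2,3) by (metis order.trans)+
  moreover have "(i, j) \<in> pairs m \<or> (j, i) \<in> pairs m"
    using ij by (auto simp: pairs_def)
  ultimately show False
    using rare[of i j] rare[of j i] pattern_cols_swap[of A i j 1 0] pattern_cols_swap[of A i j 0 1]
    by auto
qed

section \<open>Deleting rare patterns\<close>

lemma K2_free_if_pattern_missing:
  assumes "\<And>i j. (i, j) \<in> pairs m \<Longrightarrow> \<exists>w\<in>set K2. \<forall>x\<in>A. [x ! i, x ! j] \<noteq> w"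
  shows "K2_free m A"
  unfolding K2_free_def
proof (intro allI impI)
  have missing: "\<exists>u<2. \<exists>v<2. \<forall>x\<in>A. \<not> (x ! i = u \<and> x ! j = v)" if ij: "(i, j) \<in> pairs m" for i j
  proof -
    obtain w where w: "w \<in> set K2" "\<forall>x\<in>A. [x ! i, x ! j] \<noteq> w"
      using assms[OF ij] by blast
    then obtain u v where "w = [u, v]" "u < 2" "v < 2"
      unfolding K2_def by auto
    then show ?thesis
      using w(2) by auto
  qed
  fix i j assume "i < m" "j < m" "i \<noteq> j"
  then have "(i, j) \<in> pairs m \<or> (j, i) \<in> pairs m"
    by (auto simp: pairs_def)
  then show "\<exists>u<2. \<exists>v<2. \<forall>x\<in>A. \<not> (x ! i = u \<and> x ! j = v)"
    using missing by blast
qed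

lemma K2_free_Diff_patterns:
  assumes "\<And>i j. (i, j) \<in> pairs m \<Longrightarrow> w i j \<in> set K2"
  shows "K2_free m (A - (\<Union>(i, j)\<in>pairs m. pattern_cols A i j (w i j)))"
  using assms by (intro K2_free_if_pattern_missing) (auto simp: pattern_cols_def)

lemma bex_K2_card_pattern_le:
  assumes "card (pattern_cols A i j [0, 0]) \<le> h \<or> card (pattern_cols A i j [1, 0]) \<le> h \<or>
    card (pattern_cols A i j [0, 1]) \<le> h \<or> card (pattern_cols A i j [1, 1]) \<le> h"
  shows "\<exists>w\<in>set K2. card (pattern_cols A i j w) \<le> h"
  using assms by (auto simp: K2_def)

lemma obtain_rare_patterns:
  assumes "\<And>i j. (i, j) \<in> pairs m \<Longrightarrow> \<exists>w\<in>set K2. card (pattern_cols A i j w) \<le> h i j"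
  obtains w where "\<And>i j. (i, j) \<in> pairs m \<Longrightarrow> w i j \<in> set K2"
    "\<And>i j. (i, j) \<in> pairs m \<Longrightarrow> card (pattern_cols A i j (w i j)) \<le> h i j"
proof -
  have "\<forall>p\<in>pairs m. \<exists>w. w \<in> set K2 \<and> card (pattern_cols A (fst p) (snd p) w) \<le> h (fst p) (snd p)"
  proof
    fix p assume "p \<in> pairs m"
    then have "(fst p, snd p) \<in> pairs m"
      by simp
    then show "\<exists>w. w \<in> set K2 \<and> card (pattern_cols A (fst p) (snd p) w) \<le> h (fst p) (snd p)"
      using assms by blast
  qed
  then obtain W where "\<forall>p\<in>pairs m. W p \<in> set K2 \<and> card (pattern_cols A (fst p) (snd p) (W p)) \<le> h (fst p) (snd p)"
    by (rule bchoice[THEN exE])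
  then show ?thesis
    using that[of "\<lambda>i j. W (i, j)"] by fastforce
qed

lemma card_le_if_rare_patterns:
  assumes "A \<subseteq> cols m 3"
    and "\<And>i j. (i, j) \<in> pairs m \<Longrightarrow> \<exists>w\<in>set K2. card (pattern_cols A i j w) \<le> h i j"
  shows "2 * card A \<le> (m + 2) * 2 ^ m + 2 * (\<Sum>(i, j)\<in>pairs m. h i j)"
proof -
  obtain w where w: "\<And>i j. (i, j) \<in> pairs m \<Longrightarrow> w i j \<in> set K2"
    "\<And>i j. (i, j) \<in> pairs m \<Longrightarrow> card (pattern_cols A i j (w i j)) \<le> h i j"
    using obtain_rare_patterns[OF assms(2)] by blast
  define U where "U = (\<Union>(i, j)\<in>pairs m. pattern_cols A i j (w i j))"
  have "2 * card (A - U) \<le> (m + 2) * 2 ^ m"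
    using K2_free_Diff_patterns[OF w(1)] assms(1) unfolding U_def by (intro K2_free_card_le) auto
  moreover have "card A \<le> card (A - U) + card U"
    using assms(1) by (intro card_le_card_Diff_add finite_if_subset_cols) (auto simp: U_def pattern_cols_def)
  moreover have "card U \<le> (\<Sum>(i, j)\<in>pairs m. card (pattern_cols A i j (w i j)))"
    unfolding U_def using card_UN_le[OF finite_pairs] by (simp add: case_prod_beta)
  moreover have "(\<Sum>(i, j)\<in>pairs m. card (pattern_cols A i j (w i j))) \<le> (\<Sum>(i, j)\<in>pairs m. h i j)"
    using w(2) by (intro sum_mono) auto
  ultimately show ?thesis
    by linarith
qed

lemma card_le_if_rare_patterns_one_sparse:
  assumes A: "A \<subseteq> cols m 3"
    and rare: "\<And>i j. (i, j) \<in> pairs m \<Longrightarrow> \<exists>w\<in>set K2. card (pattern_cols A i j w) \<le> 2"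
    and sparse: "(i0, j0) \<in> pairs m" "\<exists>w\<in>set K2. card (pattern_cols A i0 j0 w) \<le> 1"
  shows "2 * card A + 2 \<le> (m + 2) * 2 ^ m + 2 * (m * (m - 1))"
proof -
  define h where "h i j = (if (i, j) = (i0, j0) then 1 else (2::nat))" for i j
  have "\<exists>w\<in>set K2. card (pattern_cols A i j w) \<le> h i j" if "(i, j) \<in> pairs m" for i j
  proof (cases "(i, j) = (i0, j0)")
    case True
    then show ?thesis
      using sparse by (auto simp: h_def)
  next
    case False
    then show ?thesis
      using rare[OF that] by (auto simp: h_def)
  qed
  then have "2 * card A \<le> (m + 2) * 2 ^ m + 2 * (\<Sum>(i, j)\<in>pairs m. h i j)"
    by (rule card_le_if_rare_patterns[OF A])
  moreover have "(\<Sum>(i, j)\<in>pairs m - {(i0, j0)}. h i j) = (\<Sum>p\<in>pairs m - {(i0, j0)}. 2)"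
    by (rule sum.cong) (auto simp: h_def split: if_splits)
  then have "(\<Sum>(i, j)\<in>pairs m. h i j) = 1 + 2 * (card (pairs m) - 1)"
    using sum.remove[OF finite_pairs sparse(1), of "\<lambda>(i, j). h i j"] finite_pairs sparse(1)
    by (simp add: h_def card_Diff_singleton)
  moreover have "card (pairs m) \<noteq> 0"
    using sparse(1) finite_pairs by (auto simp: card_eq_0_iff)
  ultimately show ?thesis
    using card_pairs[of m] by linarith
qed

lemma removal_cost_le_pow2:
  fixes h m :: nat
  assumes "2 \<le> m" "1 \<le> h" "h * m\<^sup>2 \<le> 2 ^ (m - 2)"
  shows "h * (m * (m - 1)) + 4 * h + 2 \<le> 2 ^ (m - 1)"
proof -
  have "m\<^sup>2 = m * (m - 1) + m"
    using assms(1) by (cases m) (simp_all add: power2_eq_square)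
  then have "h * m\<^sup>2 = h * (m * (m - 1)) + h * m"
    by (simp add: algebra_simps)
  moreover have "(2::nat) ^ (m - 1) = 2 * 2 ^ (m - 2)"
    using assms(1) by (cases m; cases "m - 1") simp_all
  moreover have "2 * h \<le> h * m"
    using assms(1) by simp
  moreover have "2 \<le> m * (m - 1)"
    using assms(1) mult_le_mono[of 2 m 1 "m - 1"] by simp
  then have "2 \<le> h * (m * (m - 1))"
    using assms(2) mult_le_mono[of 1 h 2 "m * (m - 1)"] by simp
  ultimately show ?thesis
    using assms(3) by linarith
qed

text \<open>Once a pair of rows has lost both crossing patterns, the K2-free remainder stays 2^(m-2)
  columns below the K2 bound, which outweighs the at most h (m(m-1)/2 + 2) columns removed.\<close>

lemma card_le_if_rare_patterns_two_crossings:
  assumes A: "A \<subseteq> cols m 3" and m: "2 \<le> m" and h: "1 \<le> h" "h * m\<^sup>2 \<le> 2 ^ (m - 2)"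
    and rare: "\<And>i j. (i, j) \<in> pairs m \<Longrightarrow> \<exists>w\<in>set K2. card (pattern_cols A i j w) \<le> h"
    and crossings: "(i0, j0) \<in> pairs m" "card (pattern_cols A i0 j0 [1, 0]) \<le> h"
      "card (pattern_cols A i0 j0 [0, 1]) \<le> h"
  shows "2 * card A + 2 \<le> (m + 2) * 2 ^ m"
proof -
  obtain w where w: "\<And>i j. (i, j) \<in> pairs m \<Longrightarrow> w i j \<in> set K2"
    "\<And>i j. (i, j) \<in> pairs m \<Longrightarrow> card (pattern_cols A i j (w i j)) \<le> h"
    using obtain_rare_patterns[OF rare] by blast
  define U0 where "U0 = (\<Union>(i, j)\<in>pairs m. pattern_cols A i j (w i j))"
  define U where "U = U0 \<union> pattern_cols A i0 j0 [1, 0] \<union> pattern_cols A i0 j0 [0, 1]"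
  have "K2_free m (A - U)"
    using K2_free_Diff_patterns[OF w(1)] by (rule K2_free_subset) (auto simp: U_def U0_def)
  moreover have "\<forall>x\<in>A - U. \<not> (x ! i0 = 0 \<and> x ! j0 = 1) \<and> \<not> (x ! i0 = 1 \<and> x ! j0 = 0)"
    by (auto simp: U_def pattern_cols_def)
  ultimately have "2 * card (A - U) + 2 ^ (m - 1) \<le> (m + 2) * 2 ^ m"
    using A crossings(1) by (intro K2_free_card_le_if_no_crossing) (auto simp: pairs_def)
  moreover have "card A \<le> card (A - U) + card U"
    using A by (intro card_le_card_Diff_add finite_if_subset_cols) (auto simp: U_def U0_def pattern_cols_def)
  moreover have "card U0 \<le> h * card (pairs m)"
    unfolding U0_def using w(2) by (intro card_UN_le_mult[OF finite_pairs]) auto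
  then have "card U \<le> h * card (pairs m) + 2 * h"
    unfolding U_def using crossings(2,3)
      card_Un_le[of "U0 \<union> pattern_cols A i0 j0 [1, 0]" "pattern_cols A i0 j0 [0, 1]"]
      card_Un_le[of U0 "pattern_cols A i0 j0 [1, 0]"] by linarith
  moreover have "h * (m * (m - 1)) + 4 * h + 2 \<le> 2 ^ (m - 1)"
    using m h by (rule removal_cost_le_pow2)
  moreover have "h * (m * (m - 1)) = 2 * (h * card (pairs m))"
    using card_pairs[of m] by simp
  ultimately show ?thesis
    by linarith
qed

section \<open>Tournaments of rare crossings\<close>

lemma tournament_cycle_or_source_sink:
  fixes T :: "'a \<Rightarrow> 'a \<Rightarrow> bool"
  assumes "finite V" "asymp_on V T" "totalp_on V T" "u \<in> V" "v \<in> V" "u \<noteq> v"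
  obtains i j k where "i \<in> V" "j \<in> V" "k \<in> V" "T i j" "T j k" "T k i"
  | p q where "p \<in> V" "q \<in> V" "T p q" "\<forall>r\<in>V. r \<noteq> p \<longrightarrow> r \<noteq> q \<longrightarrow> T p r \<and> T r q"
proof (cases "\<exists>i\<in>V. \<exists>j\<in>V. \<exists>k\<in>V. T i j \<and> T j k \<and> T k i")
  case True
  then show ?thesis
    using that(1) by blast
next
  case False
  have "transp_on V T"
  proof (rule transp_onI)
    fix i j k assume ijk: "i \<in> V" "j \<in> V" "k \<in> V" "T i j" "T j k"
    then have "i \<noteq> k"
      using asymp_onD[OF assms(2)] by blast
    then show "T i k"
      using False ijk totalp_onD[OF assms(3)] by blast
  qed
  then obtain p q where p: "p \<in> V" "\<forall>r\<in>V. r \<noteq> p \<longrightarrow> \<not> T r p"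
    and q: "q \<in> V" "\<forall>r\<in>V. r \<noteq> q \<longrightarrow> \<not> T q r"
    using Finite_Set.bex_min_element[OF assms(1,2)] Finite_Set.bex_max_element[OF assms(1,2)]
      assms(4) by blast
  have source: "T p r" and sink: "T r q" if "r \<in> V" "r \<noteq> p" "r \<noteq> q" for r
    using p q that totalp_onD[OF assms(3)] by blast+
  have "p \<noteq> q"
  proof
    assume "p = q"
    obtain r where "r \<in> V" "r \<noteq> p"
      using assms(4-6) by blast
    then show False
      using p q \<open>p = q\<close> totalp_onD[OF assms(3)] by blast
  qed
  then have "T p q"
    using p q totalp_onD[OF assms(3)] by blast
  then show ?thesis
    using that(2) p(1) q(1) source sink by blast
qed

definition arcs :: "nat \<Rightarrow> (nat \<Rightarrow> nat \<Rightarrow> bool) \<Rightarrow> (nat \<times> nat) set" where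
  "arcs m T = {(u, v). u < m \<and> v < m \<and> T u v}"

definition cols_01_on :: "nat list set \<Rightarrow> (nat \<times> nat) set \<Rightarrow> nat list set" where
  "cols_01_on A E = (\<Union>(u, v)\<in>E. pattern_cols A u v [0, 1])"

lemma finite_arcs: "finite (arcs m T)"
  by (rule finite_subset[of _ "{..<m} \<times> {..<m}"]) (auto simp: arcs_def)

lemma cols_01_on_subset: "cols_01_on A E \<subseteq> A"
  by (auto simp: cols_01_on_def pattern_cols_def)

lemma notin_cols_01_on_arcs:
  "x \<in> A - cols_01_on A (arcs m T) \<Longrightarrow> u < m \<Longrightarrow> v < m \<Longrightarrow> T u v \<Longrightarrow> \<not> (x ! u = 0 \<and> x ! v = 1)"
  by (auto simp: cols_01_on_def arcs_def pattern_cols_def)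

lemma card_cols_01_on_le:
  assumes "finite E" "\<And>u v. (u, v) \<in> E \<Longrightarrow> card (pattern_cols A u v [0, 1]) \<le> 2"
  shows "card (cols_01_on A E) \<le> 2 * card E"
  unfolding cols_01_on_def using assms by (intro card_UN_le_mult) auto

lemma card_arcs_le_card_pairs:
  assumes "asymp_on {..<m} T"
  shows "card (arcs m T) \<le> card (pairs m)"
proof (rule card_inj_on_le[OF _ _ finite_pairs])
  have irrefl: "u \<noteq> v" if "v < m" "T u v" for u v
    using asymp_onD[OF assms, of v v] that by auto
  show "(\<lambda>(u, v). (min u v, max u v)) ` arcs m T \<subseteq> pairs m"
  proof clarify
    fix u v assume "(u, v) \<in> arcs m T"
    then have "u < m" "v < m" "u \<noteq> v"
      using irrefl by (auto simp: arcs_def)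
    then show "(min u v, max u v) \<in> pairs m"
      by (auto simp: pairs_def)
  qed
  show "inj_on (\<lambda>(u, v). (min u v, max u v)) (arcs m T)"
  proof (rule inj_onI)
    fix a b assume "a \<in> arcs m T" "b \<in> arcs m T"
      and eq: "(\<lambda>(u, v). (min u v, max u v)) a = (\<lambda>(u, v). (min u v, max u v)) b"
    then obtain u v u' v' where uv: "a = (u, v)" "u < m" "v < m" "T u v"
      and uv': "b = (u', v')" "u' < m" "v' < m" "T u' v'"
      by (auto simp: arcs_def)
    then have "(u = u' \<and> v = v') \<or> (u = v' \<and> v = u')"
      using eq by (auto simp: min_def max_def split: if_splits)
    then show "a = b"
      using asymp_onD[OF assms, of u v] uv uv' by auto
  qed
qed

lemma K2_free_Diff_cols_01_on_arcs:
  assumes "totalp_on {..<m} T"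
  shows "K2_free m (A - cols_01_on A (arcs m T))"
proof (rule K2_free_if_pattern_missing)
  fix i j assume "(i, j) \<in> pairs m"
  then have ij: "i < m" "j < m" "i \<noteq> j"
    by (auto simp: pairs_def)
  have "T i j \<or> T j i"
    using totalp_onD[OF assms] ij by blast
  then show "\<exists>w\<in>set K2. \<forall>x\<in>A - cols_01_on A (arcs m T). [x ! i, x ! j] \<noteq> w"
  proof
    assume "T i j"
    then have "\<forall>x\<in>A - cols_01_on A (arcs m T). [x ! i, x ! j] \<noteq> [0, 1]"
      using notin_cols_01_on_arcs[of _ A m T i j] ij by auto
    then show ?thesis
      by (auto simp: K2_def)
  next
    assume "T j i"
    then have "\<forall>x\<in>A - cols_01_on A (arcs m T). [x ! i, x ! j] \<noteq> [1, 0]"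
      using notin_cols_01_on_arcs[of _ A m T j i] ij by auto
    then show ?thesis
      by (auto simp: K2_def)
  qed
qed

text \<open>Sparing the arc from the source p to the sink q spares only one column: any other column
  with a 0 in row p and a 1 in row q has a 0 or a 1 in some third row r, and is then caught by
  the arc (r, q) or (p, r).\<close>

lemma cols_01_on_arcs_source_sink:
  assumes A: "A \<subseteq> cols m 3" and pq: "p < m" "q < m"
    and source_sink: "\<forall>r<m. r \<noteq> p \<longrightarrow> r \<noteq> q \<longrightarrow> T p r \<and> T r q"
  shows "cols_01_on A (arcs m T) \<subseteq>
    insert (map (\<lambda>r. if r = p then 0 else if r = q then 1 else 2) [0..<m])
      (cols_01_on A (arcs m T - {(p, q)}))"
proof
  fix x assume x_in: "x \<in> cols_01_on A (arcs m T)"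
  show "x \<in> insert (map (\<lambda>r. if r = p then 0 else if r = q then 1 else 2) [0..<m])
      (cols_01_on A (arcs m T - {(p, q)}))"
  proof (cases "x \<in> cols_01_on A (arcs m T - {(p, q)})")
    case False
    then have x: "x \<in> A" "x ! p = 0" "x ! q = 1"
      using x_in by (auto simp: cols_01_on_def pattern_cols_def)
    have "x ! r = 2" if "r < m" "r \<noteq> p" "r \<noteq> q" for r
    proof -
      have "(r, q) \<in> arcs m T - {(p, q)}" "(p, r) \<in> arcs m T - {(p, q)}"
        using pq source_sink that by (auto simp: arcs_def)
      then have "x ! r \<noteq> 0" "x ! r \<noteq> 1"
        using False x by (auto simp: cols_01_on_def pattern_cols_def)
      then show ?thesis
        using cols3_nth[of x m r] x(1) A that(1) by auto
    qed
    moreover have "length x = m"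
      using x(1) A by (auto simp: cols_def)
    ultimately have "x = map (\<lambda>r. if r = p then 0 else if r = q then 1 else 2) [0..<m]"
      using x by (intro nth_equalityI) auto
    then show ?thesis
      by simp
  qed simp
qed

lemma card_Diff_cols_01_on_arcs_less_if_cycle:
  assumes A: "A \<subseteq> cols m 3" and T: "asymp_on {..<m} T" "totalp_on {..<m} T"
    and cycle: "i < m" "j < m" "k < m" "T i j" "T j k" "T k i"
  shows "card (A - cols_01_on A (arcs m T)) < (m + 2) * 2 ^ (m - 1)"
proof -
  define B where "B = A - cols_01_on A (arcs m T)"
  have "\<not> T u u" if "u < m" for u
    using asymp_onD[OF T(1), of u u] that by auto
  then have "i \<noteq> j" "j \<noteq> k" "i \<noteq> k"
    using cycle by auto
  moreover have "\<forall>x\<in>B. \<not> (x ! i = 0 \<and> x ! j = 1)" "\<forall>x\<in>B. \<not> (x ! j = 0 \<and> x ! k = 1)"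
    "\<forall>x\<in>B. \<not> (x ! k = 0 \<and> x ! i = 1)"
    using cycle notin_cols_01_on_arcs[of _ A m T] unfolding B_def by auto
  moreover have "K2_free m B"
    unfolding B_def using T(2) by (rule K2_free_Diff_cols_01_on_arcs)
  ultimately have "2 * card B < (m + 2) * 2 ^ m"
    using A cycle(1-3) by (intro K2_free_card_less_if_01_cycle[of m B i j k]) (auto simp: B_def)
  moreover have "(m + 2) * 2 ^ m = 2 * ((m + 2) * 2 ^ (m - 1))"
    using cycle(1) by (cases m) simp_all
  ultimately show ?thesis
    by (simp add: B_def)
qed

lemma card_cols_01_on_arcs_less_if_source_sink:
  assumes A: "A \<subseteq> cols m 3"
    and rare: "\<And>u v. u < m \<Longrightarrow> v < m \<Longrightarrow> T u v \<Longrightarrow> card (pattern_cols A u v [0, 1]) \<le> 2"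
    and pq: "p < m" "q < m" "T p q" and source_sink: "\<forall>r<m. r \<noteq> p \<longrightarrow> r \<noteq> q \<longrightarrow> T p r \<and> T r q"
  shows "card (cols_01_on A (arcs m T)) < 2 * card (arcs m T)"
proof -
  define U' where "U' = cols_01_on A (arcs m T - {(p, q)})"
  have "cols_01_on A (arcs m T) \<subseteq> insert (map (\<lambda>r. if r = p then 0 else if r = q then 1 else 2) [0..<m]) U'"
    unfolding U'_def using A pq(1,2) source_sink by (rule cols_01_on_arcs_source_sink)
  moreover have "finite U'"
    unfolding U'_def by (rule finite_if_subset_cols[OF cols_01_on_subset A])
  ultimately have "card (cols_01_on A (arcs m T)) \<le> Suc (card U')"
    by (rule card_le_Suc_if_subset_insert[rotated])
  moreover have "card U' \<le> 2 * card (arcs m T - {(p, q)})"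
    unfolding U'_def using finite_arcs rare by (intro card_cols_01_on_le) (auto simp: arcs_def)
  moreover have "(p, q) \<in> arcs m T"
    using pq by (simp add: arcs_def)
  then have "card (arcs m T - {(p, q)}) = card (arcs m T) - 1" "card (arcs m T) \<noteq> 0"
    using finite_arcs[of m T] by (auto simp: card_Diff_singleton card_eq_0_iff)
  ultimately show ?thesis
    by linarith
qed

lemma card_le_if_01_tournament:
  assumes A: "A \<subseteq> cols m 3" and m: "2 \<le> m"
    and T: "asymp_on {..<m} T" "totalp_on {..<m} T"
    and rare: "\<And>u v. u < m \<Longrightarrow> v < m \<Longrightarrow> T u v \<Longrightarrow> card (pattern_cols A u v [0, 1]) \<le> 2"
  shows "2 * card A + 2 \<le> (m + 2) * 2 ^ m + 2 * (m * (m - 1))"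
proof -
  define U where "U = cols_01_on A (arcs m T)"
  have "card A \<le> card (A - U) + card U"
    using A cols_01_on_subset unfolding U_def by (intro card_le_card_Diff_add finite_if_subset_cols)
  moreover have "2 * card (A - U) \<le> (m + 2) * 2 ^ m"
    using A K2_free_Diff_cols_01_on_arcs[OF T(2)] unfolding U_def by (intro K2_free_card_le) auto
  moreover have "card U \<le> 2 * card (arcs m T)"
    unfolding U_def using finite_arcs rare by (intro card_cols_01_on_le) (auto simp: arcs_def)
  moreover have "2 * card (arcs m T) \<le> m * (m - 1)"
    using card_arcs_le_card_pairs[OF T(1)] card_pairs[of m] by linarith
  moreover have "(m + 2) * 2 ^ m = 2 * ((m + 2) * 2 ^ (m - 1))"
    using m by (cases m) simp_all
  moreover have "0 \<in> {..<m}" "1 \<in> {..<m}" "0 \<noteq> (1::nat)"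
    using m by auto
  then have "card (A - U) < (m + 2) * 2 ^ (m - 1) \<or> card U < 2 * card (arcs m T)"
  proof (rule tournament_cycle_or_source_sink[OF finite_lessThan T])
    fix i j k assume "i \<in> {..<m}" "j \<in> {..<m}" "k \<in> {..<m}" "T i j" "T j k" "T k i"
    then show ?thesis
      using card_Diff_cols_01_on_arcs_less_if_cycle[OF A T] unfolding U_def by simp
  next
    fix p q assume "p \<in> {..<m}" "q \<in> {..<m}" "T p q"
      "\<forall>r\<in>{..<m}. r \<noteq> p \<longrightarrow> r \<noteq> q \<longrightarrow> T p r \<and> T r q"
    then show ?thesis
      using card_cols_01_on_arcs_less_if_source_sink[OF A rare] unfolding U_def by simp
  qed
  ultimately show ?thesis
    by linarith
qed

lemma card_le_if_rare_crossings:
  assumes A: "A \<subseteq> cols m 3" and m: "2 \<le> m"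
    and rare: "\<And>i j. (i, j) \<in> pairs m \<Longrightarrow>
      card (pattern_cols A i j [1, 0]) \<le> 2 \<or> card (pattern_cols A i j [0, 1]) \<le> 2"
  shows "2 * card A + 2 \<le> (m + 2) * 2 ^ m + 2 * (m * (m - 1))"
proof -
  define R where "R u v \<longleftrightarrow> card (pattern_cols A u v [0, 1]) \<le> 2" for u v
  define T where "T u v \<longleftrightarrow> R u v \<and> (R v u \<longrightarrow> u < v)" for u v
  have "R u v \<or> R v u" if "u < m" "v < m" "u \<noteq> v" for u v
  proof (cases "u < v")
    case True
    then show ?thesis
      using rare[of u v] that pattern_cols_swap[of A u v 1 0] by (auto simp: R_def pairs_def)
  next
    case False
    then show ?thesis
      using rare[of v u] that pattern_cols_swap[of A v u 1 0] by (auto simp: R_def pairs_def)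
  qed
  then have "totalp_on {..<m} T"
    by (auto simp: totalp_on_def T_def)
  moreover have "asymp_on {..<m} T"
    by (auto simp: asymp_on_def T_def)
  moreover have "card (pattern_cols A u v [0, 1]) \<le> 2" if "T u v" for u v
    using that by (simp add: T_def R_def)
  ultimately show ?thesis
    using card_le_if_01_tournament[OF A m] by blast
qed

section \<open>Upper bounds\<close>

lemma count_list_copies: "count_list (copies p F) w = p * count_list F w"
  by (induction p) (simp_all add: copies_def)

lemma set_copies: "0 < p \<Longrightarrow> set (copies p F) = set F"
  by (simp add: copies_def)

lemma length_K2_col: "w \<in> set K2 \<Longrightarrow> length w = 2"
  by (auto simp: K2_def)

lemma set_Fabcd_subset_K2: "set (Fabcd a b c d) \<subseteq> set K2"
  by (auto simp: Fabcd_def K2_def)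

lemma length_Fabcd_col: "w \<in> set (Fabcd a b c d) \<Longrightarrow> length w = 2"
  using set_Fabcd_subset_K2 length_K2_col by blast

lemma count_list_Fabcd:
  "count_list (Fabcd a b c d) w = (if w = [0, 0] then a else 0) + (if w = [1, 0] then b else 0) +
     (if w = [0, 1] then c else 0) + (if w = [1, 1] then d else 0)"
  by (simp add: Fabcd_def count_list_replicate)

lemma not_config_3K2_imp:
  assumes "A \<subseteq> cols m 3" "\<not> config 2 (copies 3 K2) m A" "(i, j) \<in> pairs m"
  shows "\<exists>w\<in>set K2. card (pattern_cols A i j w) \<le> 2"
proof -
  obtain w where "w \<in> set K2" "card (pattern_cols A i j w) < count_list (copies 3 K2) w"
    using not_config_2_imp_rare_pattern[OF _ assms(1,2), of i j] assms(3)
    by (auto simp: set_copies pairs_def K2_def)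
  moreover have "count_list (copies 3 K2) w = 3"
    using \<open>w \<in> set K2\<close> by (auto simp: count_list_copies K2_def)
  ultimately show ?thesis
    by (intro bexI[of _ w]) auto
qed

lemma not_config_3I2_imp:
  assumes "A \<subseteq> cols m 3" "\<not> config 2 (copies 3 I2) m A" "(i, j) \<in> pairs m"
  shows "card (pattern_cols A i j [1, 0]) \<le> 2 \<or> card (pattern_cols A i j [0, 1]) \<le> 2"
proof -
  obtain w where "w \<in> set I2" "card (pattern_cols A i j w) < count_list (copies 3 I2) w"
    using not_config_2_imp_rare_pattern[OF _ assms(1,2), of i j] assms(3)
    by (auto simp: set_copies pairs_def I2_def)
  moreover have "count_list (copies 3 I2) w = 3"
    using \<open>w \<in> set I2\<close> by (auto simp: count_list_copies I2_def)
  ultimately show ?thesis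
    by (auto simp: I2_def)
qed

lemma not_config_Fabcd_imp:
  assumes "A \<subseteq> cols m 3" "\<not> config 2 (Fabcd a b c d) m A" "i < m" "j < m" "i \<noteq> j"
  shows "card (pattern_cols A i j [0, 0]) < a \<or> card (pattern_cols A i j [1, 0]) < b \<or>
    card (pattern_cols A i j [0, 1]) < c \<or> card (pattern_cols A i j [1, 1]) < d"
proof -
  obtain w where "w \<in> set (Fabcd a b c d)"
    and rare: "card (pattern_cols A i j w) < count_list (Fabcd a b c d) w"
    using not_config_2_imp_rare_pattern[OF _ assms] length_Fabcd_col by blast
  then show ?thesis
    by (auto simp: count_list_Fabcd split: if_splits)
qed

lemma card_le_if_not_config_3K2:
  assumes "A \<subseteq> cols m 3" "\<not> config 2 (copies 3 K2) m A"
  shows "2 * card A \<le> (m + 2) * 2 ^ m + 2 * (m * (m - 1))"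
proof -
  have "2 * card A \<le> (m + 2) * 2 ^ m + 2 * (\<Sum>(i, j)\<in>pairs m. 2)"
    using not_config_3K2_imp[OF assms] by (intro card_le_if_rare_patterns[OF assms(1)])
  then show ?thesis
    using card_pairs[of m] by simp
qed

lemma card_le_if_not_config_3I2:
  assumes "A \<subseteq> cols m 3" "\<not> config 2 (copies 3 I2) m A" "2 \<le> m"
  shows "2 * card A + 2 \<le> (m + 2) * 2 ^ m + 2 * (m * (m - 1))"
  using not_config_3I2_imp[OF assms(1,2)] by (rule card_le_if_rare_crossings[OF assms(1,3)])

text \<open>As one of b, c equals 3, a pair of rows carrying each crossing pattern at least three times
  must, read in both orders, carry each fewer than max b c times.\<close>

lemma card_le_if_not_config_Fabcd_full_pair:
  fixes a b c d m :: nat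
  assumes bc: "min b c = 3" and ad: "max a d \<le> 2" and m: "2 \<le> m"
    and growth: "(max b c - 1) * m\<^sup>2 \<le> 2 ^ (m - 2)"
    and A: "A \<subseteq> cols m 3" and avoid: "\<not> config 2 (Fabcd a b c d) m A"
    and full: "(i0, j0) \<in> pairs m" "a \<le> card (pattern_cols A i0 j0 [0, 0])"
      "d \<le> card (pattern_cols A i0 j0 [1, 1])" "3 \<le> card (pattern_cols A i0 j0 [1, 0])"
      "3 \<le> card (pattern_cols A i0 j0 [0, 1])"
  shows "2 * card A + 2 \<le> (m + 2) * 2 ^ m"
proof -
  define h where "h = max b c - 1"
  have abcd: "a \<le> 2" "d \<le> 2" "b = 3 \<or> c = 3" "2 \<le> h" "b \<le> h + 1" "c \<le> h + 1"
    using bc ad by (auto simp: h_def min_def split: if_splits)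
  have ij0: "i0 < m" "j0 < m" "i0 \<noteq> j0"
    using full(1) by (auto simp: pairs_def)
  have "card (pattern_cols A i0 j0 [1, 0]) < b \<or> card (pattern_cols A i0 j0 [0, 1]) < c"
    "card (pattern_cols A i0 j0 [0, 1]) < b \<or> card (pattern_cols A i0 j0 [1, 0]) < c"
    using not_config_Fabcd_imp[OF A avoid ij0] not_config_Fabcd_imp[OF A avoid ij0(2,1)] ij0(3) full
      pattern_cols_swap[of A j0 i0] by auto
  then have "card (pattern_cols A i0 j0 [1, 0]) \<le> h" "card (pattern_cols A i0 j0 [0, 1]) \<le> h"
    using abcd full(4,5) by auto
  moreover have "\<exists>w\<in>set K2. card (pattern_cols A i j w) \<le> h" if "(i, j) \<in> pairs m" for i j
    using not_config_Fabcd_imp[OF A avoid, of i j] that abcd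
    by (intro bex_K2_card_pattern_le) (auto simp: pairs_def)
  ultimately show ?thesis
    using growth abcd(4) full(1) unfolding h_def
    by (intro card_le_if_rare_patterns_two_crossings[OF A m]) auto
qed

lemma card_le_if_not_config_Fabcd:
  fixes a b c d m :: nat
  assumes bc: "min b c = 3" and ad: "max a d \<le> 2" and m: "2 \<le> m"
    and growth: "(max b c - 1) * m\<^sup>2 \<le> 2 ^ (m - 2)"
    and A: "A \<subseteq> cols m 3" and avoid: "\<not> config 2 (Fabcd a b c d) m A"
  shows "2 * card A + 2 \<le> (m + 2) * 2 ^ m + 2 * (m * (m - 1))"
proof -
  define N where "N i j w = card (pattern_cols A i j w)" for i j w
  have ad': "a \<le> 2" "d \<le> 2"
    using ad by simp_all
  show ?thesis
  proof (cases "\<exists>i j. (i, j) \<in> pairs m \<and> a \<le> N i j [0, 0] \<and> d \<le> N i j [1, 1] \<and>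
      3 \<le> N i j [1, 0] \<and> 3 \<le> N i j [0, 1]")
    case True
    then have "2 * card A + 2 \<le> (m + 2) * 2 ^ m"
      unfolding N_def using card_le_if_not_config_Fabcd_full_pair[OF assms] by blast
    then show ?thesis
      by linarith
  next
    case False
    then have no_full: "N i j [0, 0] < a \<or> N i j [1, 1] < d \<or> N i j [1, 0] < 3 \<or> N i j [0, 1] < 3"
      if "(i, j) \<in> pairs m" for i j
      using that by (auto simp: not_le)
    show ?thesis
    proof (cases "\<exists>i j. (i, j) \<in> pairs m \<and> (N i j [0, 0] < a \<or> N i j [1, 1] < d)")
      case True
      then obtain i0 j0 where ij0: "(i0, j0) \<in> pairs m" "N i0 j0 [0, 0] \<le> 1 \<or> N i0 j0 [1, 1] \<le> 1"
        using ad' by fastforce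
      then have "\<exists>w\<in>set K2. card (pattern_cols A i0 j0 w) \<le> 1"
        unfolding N_def by (intro bex_K2_card_pattern_le) auto
      moreover have "\<exists>w\<in>set K2. card (pattern_cols A i j w) \<le> 2" if "(i, j) \<in> pairs m" for i j
        using no_full[OF that] ad' unfolding N_def by (intro bex_K2_card_pattern_le) auto
      ultimately show ?thesis
        using card_le_if_rare_patterns_one_sparse[OF A _ ij0(1)] by blast
    next
      case False
      then show ?thesis
        using no_full by (intro card_le_if_rare_crossings[OF A m]) (fastforce simp: N_def)
    qed
  qed
qed

section \<open>Extremal matrices\<close>

definition no_zero_before :: "nat \<Rightarrow> nat list \<Rightarrow> bool" where
  "no_zero_before c x \<longleftrightarrow> sorted_wrt (\<lambda>u v. \<not> (u = 0 \<and> v = c)) x"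

lemma no_zero_before_Cons:
  "no_zero_before c (v # t) \<longleftrightarrow> (v = 0 \<longrightarrow> c \<notin> set t) \<and> no_zero_before c t"
  by (auto simp: no_zero_before_def)

lemma no_zero_before_if_notin: "c \<notin> set t \<Longrightarrow> no_zero_before c t"
  by (induction t) (auto simp: no_zero_before_Cons no_zero_before_def)

lemma no_zero_before_nth:
  "no_zero_before c x \<Longrightarrow> i < j \<Longrightarrow> j < length x \<Longrightarrow> \<not> (x ! i = 0 \<and> x ! j = c)"
  unfolding no_zero_before_def by (blast dest: sorted_wrt_nth_less)

lemma card_cols_Suc_filter:
  "card {x \<in> cols (Suc n) 3. P x} =
     card {t \<in> cols n 3. P (0 # t)} + card {t \<in> cols n 3. P (1 # t)} + card {t \<in> cols n 3. P (2 # t)}"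
proof -
  have "fiber n 0 v {x \<in> cols (Suc n) 3. P x} = {t \<in> cols n 3. P (v # t)}" if "v < 3" for v
    using that by (auto simp: fiber_def insert_at_def Cons_in_cols_Suc cols_def)
  then show ?thesis
    using card_eq_sum_fibers[of "{x \<in> cols (Suc n) 3. P x}" n 0] by simp
qed

lemma card_cols_notin: "c < 3 \<Longrightarrow> card {t \<in> cols n 3. c \<notin> set t} = 2 ^ n"
proof -
  assume "c < 3"
  have "{t \<in> cols n 3. c \<notin> set t} = {xs. set xs \<subseteq> {0..<3} - {c} \<and> length xs = n}"
    unfolding cols_def by auto
  moreover have "card ({0..<3} - {c}) = 2"
    using \<open>c < 3\<close> by simp
  ultimately show ?thesis
    by (simp add: card_lists_length_eq)
qed

lemma card_no_zero_before:
  assumes "c < 3"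
  shows "2 * card {x \<in> cols n 3. no_zero_before c x} = (n + 2) * 2 ^ n"
proof (induction n)
  case 0
  have "{x \<in> cols 0 3. no_zero_before c x} = {[]}"
    by (auto simp: cols_def no_zero_before_def)
  then show ?case
    by simp
next
  case (Suc n)
  have "{t \<in> cols n 3. no_zero_before c (0 # t)} = {t \<in> cols n 3. c \<notin> set t}"
    using no_zero_before_if_notin by (auto simp: no_zero_before_Cons)
  moreover have "{t \<in> cols n 3. no_zero_before c (v # t)} = {t \<in> cols n 3. no_zero_before c t}"
    if "v \<noteq> 0" for v
    using that by (simp add: no_zero_before_Cons)
  ultimately have "card {x \<in> cols (Suc n) 3. no_zero_before c x} =
      2 ^ n + 2 * card {t \<in> cols n 3. no_zero_before c t}"
    using card_cols_Suc_filter[of n "no_zero_before c"] card_cols_notin[OF assms, of n] by simp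
  then show ?case
    using Suc.IH by (simp add: algebra_simps)
qed

definition zero_pair_col :: "nat \<Rightarrow> nat \<Rightarrow> nat \<Rightarrow> nat \<Rightarrow> nat list" where
  "zero_pair_col m i j v = map (\<lambda>r. if r = i \<or> r = j then 0 else v) [0..<m]"

definition K2_extremal :: "nat \<Rightarrow> nat list set" where
  "K2_extremal m = {x \<in> cols m 3. no_zero_before 0 x} \<union>
     (\<lambda>((i, j), v). zero_pair_col m i j v) ` (pairs m \<times> {1, 2})"

lemma nth_zero_pair_col: "r < m \<Longrightarrow> zero_pair_col m i j v ! r = (if r = i \<or> r = j then 0 else v)"
  by (simp add: zero_pair_col_def)

lemma length_zero_pair_col [simp]: "length (zero_pair_col m i j v) = m"
  by (simp add: zero_pair_col_def)

lemma zeros_zero_pair_col: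
  assumes "i < m" "j < m" "v \<noteq> 0"
  shows "{r. r < m \<and> zero_pair_col m i j v ! r = 0} = {i, j}"
  using assms by (auto simp: nth_zero_pair_col split: if_splits)

lemma zero_pair_col_in_cols: "v < 3 \<Longrightarrow> zero_pair_col m i j v \<in> cols m 3"
  by (auto simp: zero_pair_col_def cols_def)

lemma inj_on_zero_pair_col:
  assumes "3 \<le> m"
  shows "inj_on (\<lambda>((i, j), v). zero_pair_col m i j v) (pairs m \<times> {1, 2})"
proof (rule inj_onI)
  fix x y assume "x \<in> pairs m \<times> {1, 2}" "y \<in> pairs m \<times> {1, 2}"
    and "(\<lambda>((i, j), v). zero_pair_col m i j v) x = (\<lambda>((i, j), v). zero_pair_col m i j v) y"
  then obtain i j v i' j' v' where xy: "x = ((i, j), v)" "y = ((i', j'), v')"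
    and ij: "(i, j) \<in> pairs m" "v \<in> {1, 2}" and ij': "(i', j') \<in> pairs m" "v' \<in> {1, 2}"
    and eq: "zero_pair_col m i j v = zero_pair_col m i' j' v'"
    by auto
  have "{i, j} = {r. r < m \<and> zero_pair_col m i j v ! r = 0}"
    using ij by (intro zeros_zero_pair_col[symmetric]) (auto simp: pairs_def)
  also have "\<dots> = {i', j'}"
    unfolding eq using ij' by (intro zeros_zero_pair_col) (auto simp: pairs_def)
  finally have "i = i'" "j = j'"
    using ij(1) ij'(1) unfolding doubleton_eq_iff pairs_def by auto
  define r where "r = (if 0 \<noteq> i \<and> 0 \<noteq> j then 0 else if 1 \<noteq> i \<and> 1 \<noteq> j then 1 else (2::nat))"
  have "r < m" "r \<noteq> i" "r \<noteq> j"
    using assms ij(1) by (auto simp: r_def pairs_def)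
  then show "x = y"
    using arg_cong[OF eq, of "\<lambda>x. x ! r"] xy \<open>i = i'\<close> \<open>j = j'\<close> by (simp add: nth_zero_pair_col)
qed

lemma K2_extremal_subset_cols: "K2_extremal m \<subseteq> cols m 3"
  by (auto simp: K2_extremal_def intro: zero_pair_col_in_cols)

lemma card_K2_extremal:
  assumes "3 \<le> m"
  shows "2 * card (K2_extremal m) = (m + 2) * 2 ^ m + 2 * (m * (m - 1))"
proof -
  define Z where "Z = {x \<in> cols m 3. no_zero_before 0 x}"
  define P where "P = (\<lambda>((i, j), v). zero_pair_col m i j v) ` (pairs m \<times> {1, 2})"
  have "Z \<inter> P = {}"
  proof -
    have "\<not> no_zero_before 0 (zero_pair_col m i j v)" if "(i, j) \<in> pairs m" for i j v
      using that no_zero_before_nth[of 0 "zero_pair_col m i j v" i j]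
      by (auto simp: pairs_def nth_zero_pair_col)
    then show ?thesis
      by (auto simp: Z_def P_def)
  qed
  moreover have "card P = 2 * card (pairs m)"
    unfolding P_def using card_image[OF inj_on_zero_pair_col[OF assms]]
    by (simp add: card_cartesian_product)
  moreover have "finite Z" "finite P"
    using finite_cols finite_pairs by (simp_all add: Z_def P_def)
  ultimately have "card (K2_extremal m) = card Z + 2 * card (pairs m)"
    unfolding K2_extremal_def Z_def[symmetric] P_def[symmetric] by (simp add: card_Un_disjoint)
  then show ?thesis
    using card_no_zero_before[of 0 m] card_pairs[of m] by (simp add: Z_def)
qed

lemma card_pattern_00_K2_extremal:
  assumes "i < m" "j < m" "i \<noteq> j"
  shows "card (pattern_cols (K2_extremal m) i j [0, 0]) \<le> 2"
proof -
  define p q where "p = min i j" and "q = max i j"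
  have pq: "(p, q) \<in> pairs m" "p = i \<or> p = j" "q = i \<or> q = j"
    using assms by (auto simp: p_def q_def pairs_def)
  have sub: "pattern_cols (K2_extremal m) i j [0, 0] \<subseteq> {zero_pair_col m p q 1, zero_pair_col m p q 2}"
  proof
    fix x assume "x \<in> pattern_cols (K2_extremal m) i j [0, 0]"
    then have "x \<in> K2_extremal m" "x ! i = 0" "x ! j = 0"
      by (simp_all add: pattern_cols_def)
    then have x: "x \<in> K2_extremal m" "x ! p = 0" "x ! q = 0"
      using pq(2,3) by auto
    have "\<not> no_zero_before 0 x" if "x \<in> cols m 3"
    proof
      assume "no_zero_before 0 x"
      moreover have "p < q" "q < length x"
        using that pq(1) by (simp_all add: cols_def pairs_def)
      ultimately show False
        using no_zero_before_nth x(2,3) by blast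
    qed
    then have "x \<in> (\<lambda>((i, j), v). zero_pair_col m i j v) ` (pairs m \<times> {1, 2})"
      using x(1) unfolding K2_extremal_def by blast
    then obtain i' j' v where x': "x = zero_pair_col m i' j' v" "(i', j') \<in> pairs m" "v \<in> {1, 2}"
      by auto
    have zeros: "{r. r < m \<and> x ! r = 0} = {i', j'}"
      unfolding x'(1) using x'(2,3) by (intro zeros_zero_pair_col) (auto simp: pairs_def)
    have "p \<in> {r. r < m \<and> x ! r = 0}" "q \<in> {r. r < m \<and> x ! r = 0}"
      using x(2,3) pq(1) by (auto simp: pairs_def)
    then have "p \<in> {i', j'}" "q \<in> {i', j'}"
      unfolding zeros .
    then have "i' = p" "j' = q"
      using pq(1) x'(2) by (auto simp: pairs_def)
    moreover have "v = 1 \<or> v = 2"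
      using x'(3) by simp
    ultimately show "x \<in> {zero_pair_col m p q 1, zero_pair_col m p q 2}"
      using x'(1) by blast
  qed
  have "card (pattern_cols (K2_extremal m) i j [0, 0]) \<le> card {zero_pair_col m p q 1, zero_pair_col m p q 2}"
    by (rule card_mono[OF _ sub]) simp
  also have "\<dots> \<le> 2"
    by (rule card_doubleton_le)
  finally show ?thesis .
qed

lemma not_config_3K2_K2_extremal: "\<not> config 2 (copies 3 K2) m (K2_extremal m)"
proof
  assume "config 2 (copies 3 K2) m (K2_extremal m)"
  moreover have "\<forall>w\<in>set (copies 3 K2). length w = 2"
    by (simp add: set_copies K2_def)
  moreover have "finite (K2_extremal m)"
    using K2_extremal_subset_cols finite_cols by (rule finite_subset)
  ultimately obtain i j where "i < m" "j < m" "i \<noteq> j"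
    "count_list (copies 3 K2) [0, 0] \<le> card (pattern_cols (K2_extremal m) i j [0, 0])"
    using config_2_imp_counts by blast
  then show False
    using card_pattern_00_K2_extremal[of i m j] by (simp add: count_list_copies K2_def)
qed

text \<open>For i < j, crossing_col m i j 0 is (2..2 0 2..2 1 2..2) and crossing_col m i j 1 is
  (1..1 0 2..2 1 0..0), with the 0 in row i and the 1 in row j.  In both, (i, j) is the only pair
  of rows carrying a 0 above a 1.\<close>

definition crossing_entry :: "nat \<Rightarrow> nat \<Rightarrow> nat \<Rightarrow> nat \<Rightarrow> nat" where
  "crossing_entry i j s r =
     (if s = 0 then (if r = i then 0 else if r = j then 1 else 2)
      else (if r < i then 1 else if r = i then 0 else if r < j then 2 else if r = j then 1 else 0))"

definition crossing_col :: "nat \<Rightarrow> nat \<Rightarrow> nat \<Rightarrow> nat \<Rightarrow> nat list" where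
  "crossing_col m i j s = map (crossing_entry i j s) [0..<m]"

text \<open>The pair ((0, m - 1), 1) is left out because crossing_col m 0 (m - 1) 1 coincides with
  crossing_col m 0 (m - 1) 0.\<close>

definition I2_extremal :: "nat \<Rightarrow> nat list set" where
  "I2_extremal m = {x \<in> cols m 3. no_zero_before 1 x} \<union>
     (\<lambda>((i, j), s). crossing_col m i j s) ` (pairs m \<times> {0, 1} - {((0, m - 1), 1)})"

lemma nth_crossing_col [simp]: "r < m \<Longrightarrow> crossing_col m i j s ! r = crossing_entry i j s r"
  by (simp add: crossing_col_def)

lemma length_crossing_col [simp]: "length (crossing_col m i j s) = m"
  by (simp add: crossing_col_def)

lemma crossing_col_in_cols: "crossing_col m i j s \<in> cols m 3"
  by (auto simp: crossing_col_def cols_def crossing_entry_def)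

lemma crossing_entry_ends: "i < j \<Longrightarrow> crossing_entry i j s i = 0 \<and> crossing_entry i j s j = 1"
  by (simp add: crossing_entry_def)

lemma crossing_entry_01_unique:
  assumes "i < j" "p < q" "crossing_entry i j s p = 0" "crossing_entry i j s q = 1"
  shows "p = i \<and> q = j"
proof (cases "s = 0")
  case True
  then show ?thesis
    using assms by (auto simp: crossing_entry_def split: if_splits)
next
  case False
  then have "p = i \<or> j < p" "q < i \<or> q = j"
    using assms(3,4) by (auto simp: crossing_entry_def split: if_splits)
  then show ?thesis
    using assms(1,2) by auto
qed

lemma crossing_entry_differ:
  assumes "i < j" "j < m" "i \<noteq> 0 \<or> j \<noteq> m - 1"
  shows "\<exists>r<m. crossing_entry i j 0 r \<noteq> crossing_entry i j 1 r"
proof (cases "i = 0")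
  case True
  then show ?thesis
    using assms by (intro exI[of _ "m - 1"]) (auto simp: crossing_entry_def)
next
  case False
  then show ?thesis
    using assms by (intro exI[of _ 0]) (auto simp: crossing_entry_def)
qed

lemma inj_on_crossing_col:
  "inj_on (\<lambda>((i, j), s). crossing_col m i j s) (pairs m \<times> {0, 1} - {((0, m - 1), 1)})"
proof (rule inj_onI)
  fix x y
  assume x: "x \<in> pairs m \<times> {0, 1} - {((0, m - 1), 1)}" and y: "y \<in> pairs m \<times> {0, 1} - {((0, m - 1), 1)}"
    and eq_xy: "(\<lambda>((i, j), s). crossing_col m i j s) x = (\<lambda>((i, j), s). crossing_col m i j s) y"
  obtain i j s i' j' s' where xy: "x = ((i, j), s)" "y = ((i', j'), s')"
    by (metis prod.collapse)
  have ij: "i < j" "j < m" "s \<in> {0, 1}" "((i, j), s) \<noteq> ((0, m - 1), 1)"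
    using x unfolding xy(1) by (simp_all add: pairs_def)
  have ij': "i' < j'" "j' < m" "s' \<in> {0, 1}" "((i', j'), s') \<noteq> ((0, m - 1), 1)"
    using y unfolding xy(2) by (simp_all add: pairs_def)
  have eq: "crossing_col m i j s = crossing_col m i' j' s'"
    using eq_xy unfolding xy by simp
  have entries: "crossing_entry i j s r = crossing_entry i' j' s' r" if "r < m" for r
    using arg_cong[OF eq, of "\<lambda>x. x ! r"] that by simp
  then have "crossing_entry i' j' s' i = 0" "crossing_entry i' j' s' j = 1"
    using crossing_entry_ends[OF ij(1)] ij(1,2) by (metis order.strict_trans)+
  then have "i' = i" "j' = j"
    using crossing_entry_01_unique[OF ij'(1) ij(1)] by auto
  moreover have "s = s'"
  proof (rule ccontr)
    assume "s \<noteq> s'"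
    then have "{s, s'} = {0, 1}" "i \<noteq> 0 \<or> j \<noteq> m - 1"
      using ij(3,4) ij'(3,4) \<open>i' = i\<close> \<open>j' = j\<close> by auto
    then show False
      using crossing_entry_differ[OF ij(1,2)] entries \<open>i' = i\<close> \<open>j' = j\<close>
      by (auto simp: doubleton_eq_iff)
  qed
  ultimately show "x = y"
    using xy by simp
qed

lemma I2_extremal_subset_cols: "I2_extremal m \<subseteq> cols m 3"
  by (auto simp: I2_extremal_def crossing_col_in_cols)

lemma card_I2_extremal:
  assumes "2 \<le> m"
  shows "2 * card (I2_extremal m) + 2 = (m + 2) * 2 ^ m + 2 * (m * (m - 1))"
proof -
  define Q where "Q = pairs m \<times> {0, 1::nat} - {((0, m - 1), 1)}"
  define B where "B = {x \<in> cols m 3. no_zero_before 1 x}"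
  define C where "C = (\<lambda>((i, j), s). crossing_col m i j s) ` Q"
  have "B \<inter> C = {}"
  proof -
    have "\<not> no_zero_before 1 (crossing_col m i j s)" if "(i, j) \<in> pairs m" for i j s
      using that no_zero_before_nth[of 1 "crossing_col m i j s" i j] crossing_entry_ends[of i j s]
      by (auto simp: pairs_def)
    then show ?thesis
      by (auto simp: B_def C_def Q_def)
  qed
  moreover have "finite B" "finite Q"
    using finite_cols finite_pairs by (simp_all add: B_def Q_def)
  moreover have "card C = card Q"
    unfolding C_def Q_def using inj_on_crossing_col by (rule card_image)
  moreover have "card Q + 1 = 2 * card (pairs m)"
  proof -
    have mem: "((0, m - 1), 1) \<in> pairs m \<times> {0, 1::nat}"
      using assms by (auto simp: pairs_def)
    have "card (pairs m \<times> {0, 1::nat}) = 2 * card (pairs m)"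
      by (simp add: card_cartesian_product)
    moreover have "card Q = card (pairs m \<times> {0, 1::nat}) - 1"
      unfolding Q_def using mem finite_pairs by (simp add: card_Diff_singleton)
    moreover have "card (pairs m \<times> {0, 1::nat}) \<noteq> 0"
      using mem finite_pairs by (auto simp: card_eq_0_iff)
    ultimately show ?thesis
      by linarith
  qed
  ultimately have "card (I2_extremal m) + 1 = card B + 2 * card (pairs m)"
    unfolding I2_extremal_def B_def[symmetric] Q_def[symmetric] C_def[symmetric]
    by (simp add: card_Un_disjoint C_def)
  then show ?thesis
    using card_no_zero_before[of 1 m] card_pairs[of m] by (simp add: B_def)
qed

lemma card_pattern_01_I2_extremal:
  assumes "(p, q) \<in> pairs m"
  shows "card (pattern_cols (I2_extremal m) p q [0, 1]) \<le> 2"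
proof -
  have pq: "p < q" "q < m"
    using assms by (simp_all add: pairs_def)
  have sub: "pattern_cols (I2_extremal m) p q [0, 1] \<subseteq> {crossing_col m p q 0, crossing_col m p q 1}"
  proof
    fix x assume "x \<in> pattern_cols (I2_extremal m) p q [0, 1]"
    then have x: "x \<in> I2_extremal m" "x ! p = 0" "x ! q = 1"
      by (simp_all add: pattern_cols_def)
    have "\<not> no_zero_before 1 x" if "x \<in> cols m 3"
    proof
      assume "no_zero_before 1 x"
      moreover have "q < length x"
        using that pq by (simp add: cols_def)
      ultimately show False
        using no_zero_before_nth pq(1) x(2,3) by blast
    qed
    then have "x \<in> (\<lambda>((i, j), s). crossing_col m i j s) ` (pairs m \<times> {0, 1} - {((0, m - 1), 1)})"
      using x(1) unfolding I2_extremal_def by blast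
    then obtain i j s where x': "x = crossing_col m i j s" "(i, j) \<in> pairs m" "s \<in> {0, 1}"
      by auto
    have "crossing_entry i j s p = 0" "crossing_entry i j s q = 1"
      using x(2,3) pq unfolding x'(1) by simp_all
    then have "i = p" "j = q"
      using crossing_entry_01_unique[of i j p q s] x'(2) pq(1) by (auto simp: pairs_def)
    moreover have "s = 0 \<or> s = 1"
      using x'(3) by simp
    ultimately show "x \<in> {crossing_col m p q 0, crossing_col m p q 1}"
      using x'(1) by blast
  qed
  have "card (pattern_cols (I2_extremal m) p q [0, 1]) \<le> card {crossing_col m p q 0, crossing_col m p q 1}"
    by (rule card_mono[OF _ sub]) simp
  also have "\<dots> \<le> 2"
    by (rule card_doubleton_le)
  finally show ?thesis .
qed

lemma not_config_2_I2_extremal: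
  assumes "\<forall>w\<in>set F. length w = 2" "3 \<le> count_list F [1, 0]" "3 \<le> count_list F [0, 1]"
  shows "\<not> config 2 F m (I2_extremal m)"
  using assms card_pattern_01_I2_extremal finite_subset[OF I2_extremal_subset_cols finite_cols]
  by (intro not_config_2_if_rare_crossings) auto

lemma forb_eqI:
  assumes "A0 \<subseteq> cols m s" "\<not> config k F m A0"
    and "\<And>A. A \<subseteq> cols m s \<Longrightarrow> \<not> config k F m A \<Longrightarrow> card A \<le> card A0"
  shows "forb m s k F = card A0"
  unfolding forb_def
proof (rule Max_eqI)
  have "{card A |A. A \<subseteq> cols m s \<and> \<not> config k F m A} \<subseteq> card ` Pow (cols m s)"
    by auto
  then show "finite {card A |A. A \<subseteq> cols m s \<and> \<not> config k F m A}"
    by (rule finite_subset) (simp add: finite_cols)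
  show "card A0 \<in> {card A |A. A \<subseteq> cols m s \<and> \<not> config k F m A}"
    using assms(1,2) by blast
  fix y assume "y \<in> {card A |A. A \<subseteq> cols m s \<and> \<not> config k F m A}"
  then show "y \<le> card A0"
    using assms(3) by blast
qed

lemma forb_eq_card_I2_extremal:
  assumes "2 \<le> m" "\<forall>w\<in>set F. length w = 2" "3 \<le> count_list F [1, 0]" "3 \<le> count_list F [0, 1]"
    and bound: "\<And>A. A \<subseteq> cols m 3 \<Longrightarrow> \<not> config 2 F m A \<Longrightarrow>
      2 * card A + 2 \<le> (m + 2) * 2 ^ m + 2 * (m * (m - 1))"
  shows "forb m 3 2 F = card (I2_extremal m)"
proof (rule forb_eqI[OF I2_extremal_subset_cols not_config_2_I2_extremal[OF assms(2-4)]])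
  fix A assume "A \<subseteq> cols m 3" "\<not> config 2 F m A"
  then have "2 * card A + 2 \<le> (m + 2) * 2 ^ m + 2 * (m * (m - 1))"
    by (rule bound)
  then show "card A \<le> card (I2_extremal m)"
    using card_I2_extremal[OF assms(1)] by linarith
qed

lemma forb_3K2_eq_card_K2_extremal:
  assumes "3 \<le> m"
  shows "forb m 3 2 (copies 3 K2) = card (K2_extremal m)"
proof (rule forb_eqI[OF K2_extremal_subset_cols not_config_3K2_K2_extremal])
  fix A assume "A \<subseteq> cols m 3" "\<not> config 2 (copies 3 K2) m A"
  then have "2 * card A \<le> (m + 2) * 2 ^ m + 2 * (m * (m - 1))"
    by (rule card_le_if_not_config_3K2)
  then show "card A \<le> card (K2_extremal m)"
    using card_K2_extremal[OF assms] by linarith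
qed

theorem mainTheorem11:
  fixes a b c d m :: nat
  assumes "min b c = 3" and "max a d \<le> 2" and "m \<ge> 4"
    and "2 ^ (m - 2) \<ge> (max b c - 1) * m ^ 2"
  shows "forb m 3 2 (Fabcd a b c d) = forb m 3 2 (copies 3 I2)
         \<and> forb m 3 2 (copies 3 I2) = forb m 3 2 (copies 3 K2) - 1"
proof -
  have m: "2 \<le> m" "3 \<le> m"
    using assms(3) by simp_all
  have "3 \<le> count_list (Fabcd a b c d) [1, 0]" "3 \<le> count_list (Fabcd a b c d) [0, 1]"
    using assms(1) by (simp_all add: count_list_Fabcd)
  then have "forb m 3 2 (Fabcd a b c d) = card (I2_extremal m)"
    using length_Fabcd_col card_le_if_not_config_Fabcd[OF assms(1,2) m(1) assms(4)]
    by (intro forb_eq_card_I2_extremal[OF m(1)]) blast+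
  moreover have "forb m 3 2 (copies 3 I2) = card (I2_extremal m)"
  proof (rule forb_eq_card_I2_extremal[OF m(1)])
    show "\<forall>w\<in>set (copies 3 I2). length w = 2" "3 \<le> count_list (copies 3 I2) [1, 0]"
      "3 \<le> count_list (copies 3 I2) [0, 1]"
      by (simp_all add: set_copies count_list_copies I2_def)
  qed (rule card_le_if_not_config_3I2[OF _ _ m(1)])
  ultimately show ?thesis
    using forb_3K2_eq_card_K2_extremal[OF m(2)] card_I2_extremal[OF m(1)] card_K2_extremal[OF m(2)]
    by simp
qed

end
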